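(* Let $\beta=\sigma_1^a\sigma_2^b\sigma_1^c\sigma_2^d\in B_3$ with integers $a,b,c,d$, and $w=w(\beta)=a+b+c+d$. Then $V_{\widehat\beta}=t^{(w-2)/2}V^*_{\widehat\beta}$ with $$V^*_{\widehat\beta}=B_{1;\beta}+t^{a+2}B_{2;\beta}+Q_\beta,$$ where $B_{1;\beta}=\epsilon_w(1+t^2)+\epsilon_{a+c}t^{b+d+1}+\epsilon_a t^{c+2}A_bA_d+2\epsilon_{a+c-1}t^2A_bA_d$, $B_{2;\beta}=\epsilon_{b+d}t^{c-1}+\epsilon_dA_bA_c+\epsilon_cA_bA_d+\epsilon_bA_cA_d$, $Q_\beta=\epsilon_{c+d}t^2A_aA_b+\epsilon_{b+c}t^2A_aA_d+t^3A_aA_bA_cA_d$.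
   Context: $B_3$ is the 3-strand braid group with generators $\sigma_1,\sigma_2$; $\widehat\beta$ is the closure; $w(\beta)$ the exponent sum. $V_L$ is the Jones polynomial (unknot $=1$, $t^{-1}V_{L_+}-tV_{L_-}=(t^{1/2}-t^{-1/2})V_{L_0}$, $\sigma_i$ a positive crossing). $\epsilon_x=(-1)^x$; for an integer $w$, $A_w=(t^w+\epsilon_{w-1})/(t+1)$ (for $w>0$, $A_w=\sum_{j=0}^{w-1}\epsilon_jt^{w-1-j}$; $A_0=0$). *)

theory Defs
  imports Complex_Main
begin

text \<open>A braid word in B_n is a list of letters (i, p): the generator sigma_i
  (1 <= i < n) if p = True, its inverse if p = False.\<close>

type_synonym braid_word = "(nat \<times> bool) list"

definition sigma_pow :: "nat \<Rightarrow> int \<Rightarrow> braid_word" where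
  "sigma_pow i k = replicate (nat \<bar>k\<bar>) (i, k \<ge> 0)"

definition writhe :: "braid_word \<Rightarrow> int" where
  "writhe w = (\<Sum>x\<leftarrow>w. if snd x then 1 else -1)"

text \<open>The closed braid diagram of a word w of length m on n strands: the
  points (k, j), k a level in {0..<m} (level m is identified with level 0 by the
  closure), j a strand position in {1..n}.  A state assigns to every crossing a
  smoothing: False = vertical smoothing (identity), True = horizontal smoothing
  (cup-cap, i.e. the Temperley-Lieb generator e_i).\<close>

definition diagram_points :: "nat \<Rightarrow> braid_word \<Rightarrow> (nat \<times> nat) set" where
  "diagram_points n w = {0..<max 1 (length w)} \<times> {1..n}"

definition crossing_edges ::
  "nat \<Rightarrow> nat \<Rightarrow> nat \<Rightarrow> nat \<Rightarrow> bool \<Rightarrow> ((nat \<times> nat) \<times> (nat \<times> nat)) set" where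
  "crossing_edges n m k i h =
     (let b = Suc k mod m in
      {((k, j), (b, j)) | j. j \<in> {1..n} \<and> j \<noteq> i \<and> j \<noteq> Suc i} \<union>
      (if h then {((k, i), (k, Suc i)), ((b, i), (b, Suc i))}
            else {((k, i), (b, i)), ((k, Suc i), (b, Suc i))}))"

definition state_edges ::
  "nat \<Rightarrow> braid_word \<Rightarrow> bool list \<Rightarrow> ((nat \<times> nat) \<times> (nat \<times> nat)) set" where
  "state_edges n w s =
     (\<Union>k<length w. crossing_edges n (length w) k (fst (w ! k)) (s ! k))"

definition state_loops :: "nat \<Rightarrow> braid_word \<Rightarrow> bool list \<Rightarrow> nat" where
  "state_loops n w s =
     card (diagram_points n w // ((state_edges n w s \<union> (state_edges n w s)\<inverse>)\<^sup>*))"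

text \<open>Kauffman bracket: a crossing contributes A for its A-smoothing and A^-1
  for its B-smoothing.  For a positive crossing sigma_i the A-smoothing is the
  vertical one, for a negative crossing the horizontal one.  Normalisation:
  bracket of the unknot diagram = 1, loop value delta = -A^2 - A^-2.\<close>

definition smoothing_sign :: "nat \<times> bool \<Rightarrow> bool \<Rightarrow> int" where
  "smoothing_sign x h = (if snd x \<longleftrightarrow> \<not> h then 1 else -1)"

definition kauffman_bracket :: "nat \<Rightarrow> braid_word \<Rightarrow> real \<Rightarrow> real" where
  "kauffman_bracket n w A =
     (\<Sum>s\<in>{s. length s = length w}.
        A powi (\<Sum>k<length w. smoothing_sign (w ! k) (s ! k)) *
        (- A\<^sup>2 - A powi (-2)) ^ (state_loops n w s - 1))"

text \<open>Jones polynomial of the closure of the n-braid w, evaluated at t > 0: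
  V(t) = (-A^3)^(-writhe) <D> with A = t^(-1/4).  (The Jones polynomial is a
  Laurent polynomial in t^(1/2); it is determined by its values at t > 0.)\<close>

definition jones_closure :: "nat \<Rightarrow> braid_word \<Rightarrow> real \<Rightarrow> real" where
  "jones_closure n w t =
     (let A = t powr (-1/4) in (- (A ^ 3)) powi (- writhe w) * kauffman_bracket n w A)"

definition eps :: "int \<Rightarrow> real" where
  "eps x = (-1) powi x"

definition Apoly :: "int \<Rightarrow> real \<Rightarrow> real" where
  "Apoly w t = (t powi w + eps (w - 1)) / (t + 1)"

end

theory Submission
  imports Defs
begin

text \<open>Expand the Kauffman bracket of the closed braid as a state sum.  Rotating the word
  and deleting a vertically smoothed crossing do not change the number of circles, while two
  consecutive horizontal smoothings of the same generator give one circle more than a single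
  one (e_i^2 = delta e_i).  Hence for sigma_1^a sigma_2^b sigma_1^c sigma_2^d the number of
  circles of a state depends only on how many horizontal smoothings each of the four blocks
  contains and on which blocks contain one.  Summing over the states of each block separately
  leaves a sum over the 16 patterns of empty and non-empty blocks, in which a block of exponent
  e contributes A^e or A^e (1 + t) eps_e A_e (a geometric sum of ratio -A^-4 = -t).  Evaluating
  at A = t^(-1/4) and normalising by the writhe gives the stated polynomial.\<close>

section \<open>Connected components of a graph\<close>

definition conn :: "('a \<times> 'a) set \<Rightarrow> ('a \<times> 'a) set" where
  "conn E = (E \<union> E\<inverse>)\<^sup>*"

lemma equiv_conn: "equiv UNIV (conn E)"
  unfolding conn_def
  by (intro equivI refl_rtrancl sym_rtrancl trans_rtrancl) (auto simp: sym_def)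

lemma conn_sym: "(x, y) \<in> conn E \<Longrightarrow> (y, x) \<in> conn E"
  using equiv_conn[of E] unfolding equiv_def sym_def by blast

lemma conn_trans: "(x, y) \<in> conn E \<Longrightarrow> (y, z) \<in> conn E \<Longrightarrow> (x, z) \<in> conn E"
  unfolding conn_def by (rule rtrancl_trans)

lemma conn_edge: "(x, y) \<in> E \<Longrightarrow> (x, y) \<in> conn E"
  unfolding conn_def by auto

lemma conn_edge_converse: "(x, y) \<in> E \<Longrightarrow> (y, x) \<in> conn E"
  unfolding conn_def by auto

lemma conn_refl[simp]: "(x, x) \<in> conn E"
  unfolding conn_def by auto

lemma conn_step:
  "(a,b) \<in> conn E \<Longrightarrow> (b,c) \<in> E \<or> (c,b) \<in> E \<Longrightarrow> (a,c) \<in> conn E"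
  by (metis conn_trans conn_edge conn_edge_converse)

lemma conn_empty: "conn {} = Id"
  unfolding conn_def by simp

lemma quotient_eq_image: "P // r = (\<lambda>x. r `` {x}) ` P"
  unfolding quotient_def by auto

lemma card_quotient_conn_eq_1:
  assumes "x0 \<in> P" "\<And>z. z \<in> P \<Longrightarrow> (x0, z) \<in> conn E"
  shows "card (P // conn E) = 1"
proof -
  have eq: "conn E `` {z} = conn E `` {x0}" if "z \<in> P" for z
    using eq_equiv_class_iff[OF equiv_conn[of E] UNIV_I UNIV_I, of x0 z] assms(2)[OF that] by simp
  have "(\<lambda>x. conn E `` {x}) ` P = (\<lambda>x. conn E `` {x0}) ` P"
    by (rule image_cong) (simp_all add: eq)
  also have "\<dots> = {conn E `` {x0}}" using assms(1) by (auto simp: image_constant_conv)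
  finally have "P // conn E = {conn E `` {x0}}" unfolding quotient_eq_image .
  then show ?thesis by simp
qed

lemma card_image_eq_if_same_fibres:
  assumes "\<And>x y. x \<in> P \<Longrightarrow> y \<in> P \<Longrightarrow> (g x = g y) = (h x = h y)"
  shows "card (g ` P) = card (h ` P)"
proof -
  have "card (g ` P) = card (fst ` ((\<lambda>x. (g x, h x)) ` P))" by (simp add: image_image)
  also have "\<dots> = card ((\<lambda>x. (g x, h x)) ` P)"
    by (rule card_image) (auto simp: inj_on_def assms)
  also have "\<dots> = card (snd ` ((\<lambda>x. (g x, h x)) ` P))"
    by (rule card_image[symmetric]) (auto simp: inj_on_def assms)
  finally show ?thesis by (simp add: image_image)
qed

lemma card_quotient_conn_image:
  assumes "\<And>x y. x \<in> P \<Longrightarrow> y \<in> P \<Longrightarrow> ((x, y) \<in> conn E) = ((f x, f y) \<in> conn F)"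
  shows "card (P // conn E) = card ((f ` P) // conn F)"
proof -
  have "card (P // conn E) = card ((\<lambda>x. conn F `` {f x}) ` P)"
    unfolding quotient_eq_image
    by (rule card_image_eq_if_same_fibres)
       (simp add: eq_equiv_class_iff[OF equiv_conn] assms)
  also have "(\<lambda>x. conn F `` {f x}) ` P = (f ` P) // conn F"
    unfolding quotient_eq_image by (simp add: image_image)
  finally show ?thesis .
qed

lemma conn_iff_conn_image:
  assumes a1: "\<And>x y. (x, y) \<in> E \<Longrightarrow> (x \<in> P) = (y \<in> P)"
    and a2: "\<And>x y. (x, y) \<in> E \<Longrightarrow> x \<in> P \<Longrightarrow> (f x, f y) \<in> conn F"
    and b: "\<And>u v. (u, v) \<in> F \<Longrightarrow> \<exists>x\<in>P. \<exists>y\<in>P. f x = u \<and> f y = v \<and> (x, y) \<in> conn E"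
    and c: "\<And>x y. x \<in> P \<Longrightarrow> y \<in> P \<Longrightarrow> f x = f y \<Longrightarrow> (x, y) \<in> conn E"
    and xy: "x \<in> P" "y \<in> P"
  shows "((x, y) \<in> conn E) = ((f x, f y) \<in> conn F)"
proof
  assume "(x, y) \<in> conn E"
  then have "(x, y) \<in> (E \<union> E\<inverse>)\<^sup>*" by (simp add: conn_def)
  then have "y \<in> P \<and> (f x, f y) \<in> conn F"
  proof (induction rule: rtrancl_induct)
    case base then show ?case using xy by simp
  next
    case (step z z')
    then have zP: "z \<in> P" and cz: "(f x, f z) \<in> conn F" by auto
    from step.hyps(2) show ?case
    proof
      assume e: "(z, z') \<in> E"
      then have "z' \<in> P" using a1 zP by blast
      moreover have "(f z, f z') \<in> conn F" using a2 e zP by blast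
      ultimately show ?thesis using conn_trans[OF cz] by simp
    next
      assume "(z, z') \<in> E\<inverse>"
      then have e: "(z', z) \<in> E" by simp
      then have z'P: "z' \<in> P" using a1 zP by blast
      moreover have "(f z', f z) \<in> conn F" using a2 e z'P by blast
      ultimately show ?thesis using conn_trans[OF cz conn_sym] by simp
    qed
  qed
  then show "(f x, f y) \<in> conn F" by blast
next
  assume "(f x, f y) \<in> conn F"
  then have "(f x, f y) \<in> (F \<union> F\<inverse>)\<^sup>*" by (simp add: conn_def)
  have main: "\<And>v. (f x, v) \<in> (F \<union> F\<inverse>)\<^sup>* \<Longrightarrow> \<forall>y\<in>P. f y = v \<longrightarrow> (x, y) \<in> conn E"
  proof -
    fix v assume "(f x, v) \<in> (F \<union> F\<inverse>)\<^sup>*"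
    then show "\<forall>y\<in>P. f y = v \<longrightarrow> (x, y) \<in> conn E"
    proof (induction rule: rtrancl_induct)
      case base then show ?case using c xy by (metis)
    next
      case (step v v')
      show ?case
      proof (intro ballI impI)
        fix y assume y: "y \<in> P" "f y = v'"
        from step.hyps(2) consider "(v, v') \<in> F" | "(v', v) \<in> F" by blast
        then obtain x1 y1 where x1: "x1 \<in> P" "y1 \<in> P" "f x1 = v" "f y1 = v'" "(x1, y1) \<in> conn E"
        proof cases
          case 1 then show ?thesis using b that by blast
        next
          case 2 then obtain x1 y1 where h: "x1 \<in> P" "y1 \<in> P" "f x1 = v'" "f y1 = v" "(x1, y1) \<in> conn E"
            using b by blast
          show ?thesis by (rule that[of y1 x1]) (use h conn_sym[OF h(5)] in simp_all)
        qed
        have h1: "(x, x1) \<in> conn E" using step.IH x1 by blast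
        have h2: "(y1, y) \<in> conn E" using c x1 y by metis
        show "(x, y) \<in> conn E" using conn_trans[OF conn_trans[OF h1 x1(5)] h2] .
      qed
    qed
  qed
  show "(x, y) \<in> conn E" using main[OF \<open>(f x, f y) \<in> (F \<union> F\<inverse>)\<^sup>*\<close>] xy by blast
qed

lemma conn_Image_eq_closed:
  assumes cl: "\<And>x y. (x,y) \<in> E \<Longrightarrow> (x \<in> X) = (y \<in> X)"
    and co: "\<And>x y. x \<in> X \<Longrightarrow> y \<in> X \<Longrightarrow> (x,y) \<in> conn E" and x0: "x0 \<in> X"
  shows "conn E `` {x0} = X"
proof
  show "conn E `` {x0} \<subseteq> X"
  proof
    fix y assume "y \<in> conn E `` {x0}"
    then have "(x0, y) \<in> (E \<union> E\<inverse>)\<^sup>*" by (simp add: conn_def)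
    then show "y \<in> X"
    proof (induction rule: rtrancl_induct)
      case base then show ?case using x0 .
    next
      case (step z z') then show ?case using cl by blast
    qed
  qed
  show "X \<subseteq> conn E `` {x0}" using co x0 by blast
qed

lemma card_quotient_remove_class:
  assumes "finite P" "x0 \<in> P" "X = conn E `` {x0}" "X \<subseteq> P"
  shows "card (P // conn E) = Suc (card ((P - X) // conn E))"
proof -
  have img: "P // conn E = insert X ((P - X) // conn E)"
  proof -
    have "P = insert x0 ((X - {x0}) \<union> (P - X))" using assms by auto
    moreover have "(\<lambda>x. conn E `` {x}) ` (X - {x0}) \<subseteq> {X}"
      using assms(3) eq_equiv_class_iff[OF equiv_conn[of E]]
      by (auto dest: conn_sym)
    ultimately show ?thesis unfolding quotient_eq_image using assms(3) by auto
  qed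
  have notin: "X \<notin> (P - X) // conn E"
  proof
    assume "X \<in> (P - X) // conn E"
    then obtain y where "y \<in> P - X" "X = conn E `` {y}" unfolding quotient_eq_image by auto
    then show False using assms(3) by auto
  qed
  have "finite ((P - X) // conn E)" using assms(1) unfolding quotient_eq_image by simp
  then show ?thesis using img notin by simp
qed

section \<open>States of a closed braid diagram\<close>

lemma mem_crossing_edges:
  "(((k1,j1),(k2,j2)) \<in> crossing_edges n m k i h) \<longleftrightarrow>
   (k1 = k \<and> k2 = Suc k mod m \<and> j2 = j1 \<and> 1 \<le> j1 \<and> j1 \<le> n \<and> j1 \<noteq> i \<and> j1 \<noteq> Suc i) \<or>
   (h \<and> j1 = i \<and> j2 = Suc i \<and> k2 = k1 \<and> (k1 = k \<or> k1 = Suc k mod m)) \<or>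
   (\<not> h \<and> k1 = k \<and> k2 = Suc k mod m \<and> j2 = j1 \<and> (j1 = i \<or> j1 = Suc i))"
  unfolding crossing_edges_def Let_def by auto

lemma crossing_edges_levels:
  assumes "(x,y) \<in> crossing_edges n m k i h"
  shows "(fst x = k \<or> fst x = Suc k mod m) \<and> (fst y = k \<or> fst y = Suc k mod m)"
  using assms by (cases x; cases y) (auto simp: mem_crossing_edges)

lemma mem_state_edges:
  "(e \<in> state_edges n w s) \<longleftrightarrow> (\<exists>k<length w. e \<in> crossing_edges n (length w) k (fst (w ! k)) (s ! k))"
  unfolding state_edges_def by auto

lemma state_edgesI:
  "k < length w \<Longrightarrow> e \<in> crossing_edges n (length w) k (fst (w ! k)) (s ! k) \<Longrightarrow> e \<in> state_edges n w s"
  unfolding mem_state_edges by blast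

lemma state_edgesE:
  assumes "(x,y) \<in> state_edges n w s"
  obtains k where "k < length w" "(x,y) \<in> crossing_edges n (length w) k (fst (w ! k)) (s ! k)"
  using assms mem_state_edges by blast

lemma mem_state_edges_append:
  assumes "length su = length u" "length s = length w"
  shows "e \<in> state_edges n (u @ w) (su @ s) \<longleftrightarrow>
    (\<exists>k<length u. e \<in> crossing_edges n (length (u @ w)) k (fst (u ! k)) (su ! k)) \<or>
    (\<exists>k. length u \<le> k \<and> k < length (u @ w) \<and>
      e \<in> crossing_edges n (length (u @ w)) k (fst ((u @ w) ! k)) ((su @ s) ! k))"
  unfolding mem_state_edges using assms by (auto simp: nth_append not_less) (metis not_less)+

definition valid_word :: "nat \<Rightarrow> braid_word \<Rightarrow> bool" where
  "valid_word n w \<longleftrightarrow> (\<forall>l\<in>set w. 1 \<le> fst l \<and> Suc (fst l) \<le> n)"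

lemma valid_word_append_commute: "valid_word n (x@y) = valid_word n (y@x)"
  unfolding valid_word_def by auto

lemma state_loops_conn: "state_loops n w s = card (diagram_points n w // conn (state_edges n w s))"
  unfolding state_loops_def conn_def by simp

lemma mem_diagram_points[simp]: "((k,j) \<in> diagram_points n w) = (k < max 1 (length w) \<and> 1 \<le> j \<and> j \<le> n)"
  unfolding diagram_points_def by auto

lemma finite_diagram_points: "finite (diagram_points n w)"
  unfolding diagram_points_def by simp

lemma state_edge_in_points:
  assumes "valid_word n w" "(p, q) \<in> state_edges n w s"
  shows "p \<in> diagram_points n w \<and> q \<in> diagram_points n w"
proof -
  obtain k where k: "k < length w" "(p, q) \<in> crossing_edges n (length w) k (fst (w ! k)) (s ! k)"
    using assms(2) mem_state_edges by blast
  have "1 \<le> fst (w ! k)" "Suc (fst (w ! k)) \<le> n"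
    using assms(1) k(1) nth_mem unfolding valid_word_def by blast+
  moreover have "Suc k mod length w < length w"
    by (rule mod_less_divisor) (use k(1) in auto)
  ultimately show ?thesis
    using k by (cases p; cases q) (auto simp: mem_crossing_edges)
qed

lemma state_edge_points_iff:
  assumes "valid_word n w" "(x, y) \<in> state_edges n w s"
  shows "(x \<in> diagram_points n w) = (y \<in> diagram_points n w)"
  using state_edge_in_points[OF assms] by blast

lemma state_loops_cong_generators:
  assumes "map fst w = map fst w'"
  shows "state_loops n w s = state_loops n w' s"
proof -
  have l: "length w = length w'" using assms by (metis length_map)
  have "fst (w ! k) = fst (w' ! k)" if "k < length w" for k
    using assms that l by (metis nth_map)
  then have "state_edges n w s = state_edges n w' s"
    unfolding state_edges_def using l by auto
  moreover have "diagram_points n w = diagram_points n w'" unfolding diagram_points_def using l by simp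
  ultimately show ?thesis unfolding state_loops_def by simp
qed

lemma Suc_mod_cases: "k < m \<Longrightarrow> Suc k mod m = Suc k \<or> Suc k mod m = 0"
  by (metis Suc_lessI mod_less mod_self)

lemma nth_append_rotate:
  assumes "k < length x + length y"
  shows "(y @ x) ! ((k + length y) mod (length x + length y)) = (x @ y) ! k"
proof (cases "k < length x")
  case True
  then have "(k + length y) mod (length x + length y) = k + length y" by simp
  then show ?thesis using True by (simp add: nth_append)
next
  case False
  then have "(k + length y) mod (length x + length y) = k - length x"
    using assms by (simp add: mod_if)
  moreover have "k - length x < length y" using False assms by simp
  ultimately show ?thesis using False by (simp add: nth_append)
qed

lemma Suc_mod_add_mod:
  assumes "0 < m"
  shows "(Suc k mod m + l) mod m = Suc ((k + l) mod m) mod m"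
  by (metis add_Suc mod_Suc_eq mod_add_left_eq)

lemma state_edge_rotate:
  assumes lx: "length sx = length x" and ly: "length sy = length y"
    and e: "((k1,j1),(k2,j2)) \<in> state_edges n (x@y) (sx@sy)"
  shows "(((k1 + length y) mod (length x + length y), j1), ((k2 + length y) mod (length x + length y), j2))
           \<in> state_edges n (y@x) (sy@sx)"
proof -
  let ?m = "length x + length y"
  obtain k where k: "k < ?m" "((k1,j1),(k2,j2)) \<in> crossing_edges n ?m k (fst ((x@y) ! k)) ((sx@sy) ! k)"
    using e mem_state_edges by fastforce
  define k' where "k' = (k + length y) mod ?m"
  have m0: "0 < ?m" using k(1) by linarith
  have k'm: "k' < ?m" using m0 unfolding k'_def by simp
  have w': "(y@x) ! k' = (x@y) ! k" using nth_append_rotate[OF k(1)] unfolding k'_def .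
  have s': "(sy@sx) ! k' = (sx@sy) ! k" using nth_append_rotate[of k sx sy] k(1) lx ly unfolding k'_def by simp
  have b': "(Suc k mod ?m + length y) mod ?m = Suc k' mod ?m" unfolding k'_def
    by (rule Suc_mod_add_mod[OF m0])
  have kk: "(k + length y) mod ?m = k'" unfolding k'_def ..
  have "(((k1 + length y) mod ?m, j1), ((k2 + length y) mod ?m, j2))
           \<in> crossing_edges n ?m k' (fst ((y@x) ! k')) ((sy@sx) ! k')"
    using k(2) unfolding mem_crossing_edges w' s' using b' kk by auto
  then show ?thesis unfolding mem_state_edges using k'm by (auto simp: add.commute)
qed

lemma mod_add_rotate_cancel:
  fixes k m a b :: nat
  assumes "k < m" "a + b = m"
  shows "((k + a) mod m + b) mod m = k"
proof -
  have "((k + a) mod m + b) mod m = (k + a + b) mod m" by (simp add: mod_simps)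
  also have "\<dots> = (k + m) mod m" using assms by (simp add: add.assoc)
  also have "\<dots> = k" using assms by simp
  finally show ?thesis .
qed

lemma state_loops_rotate:
  assumes lx: "length sx = length x" and ly: "length sy = length y" and v: "valid_word n (x@y)"
  shows "state_loops n (x@y) (sx@sy) = state_loops n (y@x) (sy@sx)"
proof (cases "x @ y = []")
  case True then show ?thesis using lx ly by simp
next
  case False
  define m where "m = length x + length y"
  have m0: "0 < m" using False unfolding m_def by simp
  define f where "f = (\<lambda>(k::nat, j::nat). ((k + length y) mod m, j))"
  define g where "g = (\<lambda>(k::nat, j::nat). ((k + length x) mod m, j))"
  let ?P = "diagram_points n (x@y)"
  let ?Q = "diagram_points n (y@x)"
  have P: "?P = {0..<m} \<times> {1..n}" "?Q = {0..<m} \<times> {1..n}"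
    unfolding diagram_points_def m_def using m0 m_def by (auto simp: max_def)
  have fg: "f (g z) = z" if "z \<in> ?Q" for z
    using that P mod_add_rotate_cancel[of _ m "length x" "length y"] unfolding f_def g_def m_def
    by (cases z) auto
  have gf: "g (f z) = z" if "z \<in> ?P" for z
    using that P mod_add_rotate_cancel[of _ m "length y" "length x"] unfolding f_def g_def m_def
    by (cases z) (auto simp: add.commute)
  have fP: "f ` ?P = ?Q"
  proof
    show "f ` ?P \<subseteq> ?Q" using P m0 unfolding f_def by auto
    show "?Q \<subseteq> f ` ?P"
    proof
      fix z assume z: "z \<in> ?Q"
      have "g z \<in> ?P" using z P m0 unfolding g_def by (cases z) auto
      then show "z \<in> f ` ?P" using fg[OF z] by (metis image_eqI)
    qed
  qed
  have fe: "(f p, f q) \<in> state_edges n (y@x) (sy@sx)" if "(p, q) \<in> state_edges n (x@y) (sx@sy)" for p q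
    using state_edge_rotate[OF lx ly, of "fst p" "snd p" "fst q" "snd q" n] that
    unfolding f_def m_def by (cases p; cases q) auto
  have ge: "(g p, g q) \<in> state_edges n (x@y) (sx@sy)" if "(p, q) \<in> state_edges n (y@x) (sy@sx)" for p q
    using state_edge_rotate[OF ly lx, of "fst p" "snd p" "fst q" "snd q" n] that
    unfolding g_def m_def by (cases p; cases q) (auto simp: add.commute)
  have "state_loops n (x@y) (sx@sy) = card ((f ` ?P) // conn (state_edges n (y@x) (sy@sx)))"
    unfolding state_loops_conn
  proof (rule card_quotient_conn_image, rule conn_iff_conn_image)
    fix p q assume "(p, q) \<in> state_edges n (x@y) (sx@sy)"
    then show "(p \<in> ?P) = (q \<in> ?P)" using state_edge_points_iff[OF v] by blast
  next
    fix p q assume "(p, q) \<in> state_edges n (x@y) (sx@sy)"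
    then show "(f p, f q) \<in> conn (state_edges n (y@x) (sy@sx))" by (rule conn_edge[OF fe])
  next
    fix u v' assume uv: "(u, v') \<in> state_edges n (y@x) (sy@sx)"
    have v2: "valid_word n (y@x)" using v valid_word_append_commute by blast
    have inQ: "u \<in> ?Q" "v' \<in> ?Q"
      using state_edge_in_points[OF v2 uv] by auto
    have gP: "g u \<in> ?P" "g v' \<in> ?P"
      using state_edge_in_points[OF v ge[OF uv]] by auto
    have h: "f (g u) = u \<and> f (g v') = v' \<and> (g u, g v') \<in> conn (state_edges n (x@y) (sx@sy))"
      using fg[OF inQ(1)] fg[OF inQ(2)] conn_edge[OF ge[OF uv]] by simp
    show "\<exists>p\<in>?P. \<exists>q\<in>?P. f p = u \<and> f q = v' \<and> (p, q) \<in> conn (state_edges n (x@y) (sx@sy))"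
      by (rule bexI[of _ "g u"], rule bexI[of _ "g v'"]) (rule h, rule gP(2), rule gP(1))
  next
    fix p q assume pq: "p \<in> ?P" "q \<in> ?P" "f p = f q"
    have "p = q" using gf[OF pq(1)] gf[OF pq(2)] pq(3) by metis
    then show "(p, q) \<in> conn (state_edges n (x@y) (sx@sy))" by simp
  qed
  then show ?thesis unfolding fP state_loops_conn .
qed

lemma crossing_edges_shift:
  assumes fk: "\<And>j. f (k,j) = (k',j)" and fb: "\<And>j. f (Suc k mod m1, j) = (Suc k' mod m2, j)"
    and e: "(x,y) \<in> crossing_edges n m1 k i h"
  shows "(f x, f y) \<in> crossing_edges n m2 k' i h"
proof -
  obtain k1 j1 k2 j2 where xy: "x = (k1,j1)" "y = (k2,j2)" by (cases x; cases y)
  show ?thesis using e unfolding xy mem_crossing_edges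
    by (elim disjE conjE; simp add: fk fb mem_crossing_edges)
qed

lemma crossing_edges_shift_lift:
  assumes fk: "\<And>j. f (k,j) = (k',j)" and fb: "\<And>j. f (Suc k mod m1, j) = (Suc k' mod m2, j)"
    and e: "(x',y') \<in> crossing_edges n m2 k' i h"
  shows "\<exists>x y. (x,y) \<in> crossing_edges n m1 k i h \<and> f x = x' \<and> f y = y'"
proof -
  obtain k1 j1 k2 j2 where xy: "x' = (k1,j1)" "y' = (k2,j2)" by (cases x'; cases y')
  from e[unfolded xy mem_crossing_edges] show ?thesis
  proof (elim disjE conjE)
    assume "k1 = k'" "k2 = Suc k' mod m2" "j2 = j1" "1 \<le> j1" "j1 \<le> n" "j1 \<noteq> i" "j1 \<noteq> Suc i"
    then show ?thesis using fk fb unfolding xy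
      by (intro exI[of _ "(k,j1)"] exI[of _ "(Suc k mod m1,j1)"]) (simp add: mem_crossing_edges)
  next
    assume "h" "j1 = i" "j2 = Suc i" "k2 = k1" "k1 = k'"
    then show ?thesis using fk fb unfolding xy
      by (intro exI[of _ "(k,i)"] exI[of _ "(k,Suc i)"]) (simp add: mem_crossing_edges)
  next
    assume "h" "j1 = i" "j2 = Suc i" "k2 = k1" "k1 = Suc k' mod m2"
    then show ?thesis using fk fb unfolding xy
      by (intro exI[of _ "(Suc k mod m1,i)"] exI[of _ "(Suc k mod m1,Suc i)"]) (simp add: mem_crossing_edges)
  next
    assume "\<not> h" "k1 = k'" "k2 = Suc k' mod m2" "j2 = j1" "j1 = i"
    then show ?thesis using fk fb unfolding xy
      by (intro exI[of _ "(k,j1)"] exI[of _ "(Suc k mod m1,j1)"]) (auto simp add: mem_crossing_edges)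
  next
    assume "\<not> h" "k1 = k'" "k2 = Suc k' mod m2" "j2 = j1" "j1 = Suc i"
    then show ?thesis using fk fb unfolding xy
      by (intro exI[of _ "(k,j1)"] exI[of _ "(Suc k mod m1,j1)"]) (auto simp add: mem_crossing_edges)
  qed
qed

text \<open>The map f identifies the diagram of u @ w, minus a set X of points in the interior levels
  of u (a union of circles), with the diagram of v @ w: it acts by g on the levels of u and
  shifts the levels of w down by the length difference.  The hypotheses say that f maps the
  state edges of the prefix u onto those of v up to connectedness.\<close>

lemma card_quotient_prefix_replace:
  fixes u v w :: braid_word and su sv s :: "bool list" and n :: nat
    and g :: "nat \<times> nat \<Rightarrow> nat \<times> nat" and X :: "(nat \<times> nat) set"
    and f :: "nat \<times> nat \<Rightarrow> nat \<times> nat"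
  defines "P1 \<equiv> diagram_points n (u@w)" and "P2 \<equiv> diagram_points n (v@w)"
    and "E1 \<equiv> state_edges n (u@w) (su@s)" and "E2 \<equiv> state_edges n (v@w) (sv@s)"
  assumes fdef: "\<And>a j. f (a,j) = (if a < length u then g (a,j) else (a - (length u - length v), j))"
    and len: "length su = length u" "length sv = length v" "length s = length w"
    and qp: "length v \<le> length u" and p0: "0 < length u"
    and v1: "valid_word n (u@w)"
    and g0: "\<And>j. g (0,j) = (0,j)"
    and Xlev: "\<And>a j. (a,j) \<in> X \<Longrightarrow> 0 < a \<and> a < length u"
    and pa1: "\<And>k x y. k < length u \<Longrightarrow> (x,y) \<in> crossing_edges n (length (u@w)) k (fst (u!k)) (su!k)
      \<Longrightarrow> (x \<in> X) = (y \<in> X)"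
    and pa2: "\<And>k x y. k < length u \<Longrightarrow> (x,y) \<in> crossing_edges n (length (u@w)) k (fst (u!k)) (su!k)
      \<Longrightarrow> x \<notin> X \<Longrightarrow> (f x, f y) \<in> conn E2"
    and pb: "\<And>k x y. k < length v \<Longrightarrow> (x,y) \<in> crossing_edges n (length (v@w)) k (fst (v!k)) (sv!k)
      \<Longrightarrow> \<exists>x'\<in>P1 - X. \<exists>y'\<in>P1 - X. f x' = x \<and> f y' = y \<and> (x',y') \<in> conn E1"
    and pc: "\<And>x y. x \<in> P1 - X \<Longrightarrow> y \<in> P1 - X \<Longrightarrow> fst x < length u \<Longrightarrow> f x = f y
      \<Longrightarrow> (x,y) \<in> conn E1"
    and pd1: "\<And>a j. (a,j) \<in> P1 - X \<Longrightarrow> a < length u \<Longrightarrow> g (a,j) \<in> P2"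
    and pd2: "\<And>a j. (a,j) \<in> P2 \<Longrightarrow> a < length v \<Longrightarrow> (a,j) \<in> f ` (P1 - X)"
  shows "card ((P1 - X) // conn E1) = state_loops n (v@w) (sv@s)"
proof -
  define p where "p = length u"
  define q where "q = length v"
  define d where "d = p - q"
  define m1 where "m1 = length (u@w)"
  define m2 where "m2 = length (v@w)"
  have m1: "m1 = p + length w" and m2: "m2 = q + length w" and m12: "m1 = m2 + d" and dp: "d \<le> p"
    using qp unfolding m1_def m2_def p_def q_def d_def by auto
  have p0': "0 < p" using p0 p_def by simp
  have fk: "f (a,j) = (a - d, j)" if "p \<le> a" for a j
    using that fdef unfolding p_def d_def q_def by simp
  have fb: "f (Suc k mod m1, j) = (Suc (k - d) mod m2, j)" if "p \<le> k" "k < m1" for k j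
  proof (cases "Suc k < m1")
    case True
    then have "Suc (k - d) < m2" using that m12 dp by simp
    then show ?thesis using True fk[of "Suc k"] that dp by simp
  next
    case False
    then have "Suc k = m1" using that by simp
    moreover have "Suc (k - d) = m2" using that m12 dp \<open>Suc k = m1\<close> by simp
    ultimately show ?thesis using fdef g0 p0 by simp
  qed
  have nth1: "(u@w) ! k = (v@w) ! (k - d)" "(su@s) ! k = (sv@s) ! (k - d)" if "p \<le> k" for k
    using that len qp unfolding p_def q_def d_def by (auto simp: nth_append)
  have E1_iff: "(x,y) \<in> E1 \<longleftrightarrow> (\<exists>k<p. (x,y) \<in> crossing_edges n m1 k (fst (u!k)) (su!k)) \<or>
        (\<exists>k. p \<le> k \<and> k < m1 \<and> (x,y) \<in> crossing_edges n m1 k (fst ((u@w)!k)) ((su@s)!k))" for x y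
    unfolding E1_def m1_def p_def by (rule mem_state_edges_append[OF len(1,3)])
  have E2_iff: "(x,y) \<in> E2 \<longleftrightarrow> (\<exists>k<q. (x,y) \<in> crossing_edges n m2 k (fst (v!k)) (sv!k)) \<or>
        (\<exists>k. q \<le> k \<and> k < m2 \<and> (x,y) \<in> crossing_edges n m2 k (fst ((v@w)!k)) ((sv@s)!k))" for x y
    unfolding E2_def m2_def q_def by (rule mem_state_edges_append[OF len(2,3)])
  have notX: "z \<notin> X" if "fst z = k \<or> fst z = Suc k mod m1" "p \<le> k" "k < m1" for z k
  proof
    assume "z \<in> X"
    then have "0 < fst z \<and> fst z < p" using Xlev[of "fst z" "snd z"] p_def by simp
    moreover have "Suc k mod m1 = Suc k \<or> Suc k mod m1 = 0"
      using that(3) by (rule Suc_mod_cases)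
    ultimately show False using that by auto
  qed
  have P1: "P1 = {0..<m1} \<times> {1..n}" using p0 unfolding P1_def diagram_points_def m1_def by (auto simp: max_def)
  have P2: "P2 = {0..<max 1 m2} \<times> {1..n}" unfolding P2_def diagram_points_def m2_def by auto
  have fP: "f ` (P1 - X) = P2"
  proof
    show "f ` (P1 - X) \<subseteq> P2"
    proof
      fix z assume "z \<in> f ` (P1 - X)"
      then obtain a j where aj: "(a,j) \<in> P1 - X" "z = f (a,j)" by auto
      show "z \<in> P2"
      proof (cases "a < p")
        case True then show ?thesis using aj pd1 fdef p_def by simp
      next
        case False then show ?thesis using aj fk P1 P2 m12 by auto
      qed
    qed
    show "P2 \<subseteq> f ` (P1 - X)"
    proof
      fix z assume z: "z \<in> P2"
      obtain a j where aj: "z = (a,j)" by (cases z)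
      show "z \<in> f ` (P1 - X)"
      proof (cases "a < q")
        case True then show ?thesis using z aj pd2 q_def by simp
      next
        case False
        show ?thesis
        proof (cases "m2 = 0")
          case True
          then have "a = 0" using z aj P2 by simp
          then have "(0, j) \<in> P1 - X" "f (0, j) = z" using z aj P1 P2 m1 p0' Xlev[of 0 j] fdef g0 p0 by auto
          then show ?thesis by (metis image_eqI)
        next
          case m20: False
          have "a < m2" using z aj P2 m20 by (auto simp: max_def split: if_splits)
          then have "(a + d, j) \<in> P1 - X" using z aj P1 P2 m12 Xlev[of "a+d" j] False d_def p_def q_def by auto
          moreover have "f (a + d, j) = z" using aj fk[of "a+d" j] False d_def p_def q_def by simp
          ultimately show ?thesis by (metis image_eqI)
        qed
      qed
    qed
  qed
  have "card ((P1 - X) // conn E1) = card ((f ` (P1 - X)) // conn E2)"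
  proof (rule card_quotient_conn_image, rule conn_iff_conn_image)
    fix x y assume e: "(x, y) \<in> E1"
    have xyP: "x \<in> P1" "y \<in> P1" using state_edge_in_points[OF v1] e unfolding E1_def P1_def by auto
    from e[unfolded E1_iff] show "(x \<in> P1 - X) = (y \<in> P1 - X)"
    proof
      assume "\<exists>k<p. (x,y) \<in> crossing_edges n m1 k (fst (u!k)) (su!k)"
      then show ?thesis using pa1 xyP p_def m1_def by blast
    next
      assume "\<exists>k. p \<le> k \<and> k < m1 \<and> (x,y) \<in> crossing_edges n m1 k (fst ((u@w)!k)) ((su@s)!k)"
      then obtain k where k: "p \<le> k" "k < m1" "(x,y) \<in> crossing_edges n m1 k (fst ((u@w)!k)) ((su@s)!k)" by blast
      then have "x \<notin> X" "y \<notin> X" using crossing_edges_levels[OF k(3)] notX by blast+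
      then show ?thesis using xyP by blast
    qed
  next
    fix x y assume e: "(x, y) \<in> E1" and xP: "x \<in> P1 - X"
    from e[unfolded E1_iff] show "(f x, f y) \<in> conn E2"
    proof
      assume "\<exists>k<p. (x,y) \<in> crossing_edges n m1 k (fst (u!k)) (su!k)"
      then show ?thesis using pa2 xP p_def m1_def by blast
    next
      assume "\<exists>k. p \<le> k \<and> k < m1 \<and> (x,y) \<in> crossing_edges n m1 k (fst ((u@w)!k)) ((su@s)!k)"
      then obtain k where k: "p \<le> k" "k < m1" "(x,y) \<in> crossing_edges n m1 k (fst ((u@w)!k)) ((su@s)!k)" by blast
      have "(f x, f y) \<in> crossing_edges n m2 (k - d) (fst ((v@w)!(k-d))) ((sv@s)!(k-d))"
        using crossing_edges_shift[of f k "k - d" m1 m2, OF fk fb k(3)] k nth1 by simp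
      moreover have "q \<le> k - d" "k - d < m2" using k m12 dp d_def qp p_def q_def by auto
      ultimately have "(f x, f y) \<in> E2" unfolding E2_iff by blast
      then show ?thesis by (rule conn_edge)
    qed
  next
    fix x' y' assume e: "(x', y') \<in> E2"
    from e[unfolded E2_iff] show "\<exists>x\<in>P1 - X. \<exists>y\<in>P1 - X. f x = x' \<and> f y = y' \<and> (x,y) \<in> conn E1"
    proof
      assume "\<exists>k<q. (x',y') \<in> crossing_edges n m2 k (fst (v!k)) (sv!k)"
      then show ?thesis using pb q_def m2_def by blast
    next
      assume "\<exists>k. q \<le> k \<and> k < m2 \<and> (x',y') \<in> crossing_edges n m2 k (fst ((v@w)!k)) ((sv@s)!k)"
      then obtain k' where k': "q \<le> k'" "k' < m2" "(x',y') \<in> crossing_edges n m2 k' (fst ((v@w)!k')) ((sv@s)!k')" by blast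
      define k where "k = k' + d"
      have k: "p \<le> k" "k < m1" "k - d = k'" using k' m12 unfolding k_def d_def by auto
      have fk': "f (k, j) = (k', j)" for j using fk[OF k(1)] k(3) by simp
      have fb': "f (Suc k mod m1, j) = (Suc k' mod m2, j)" for j using fb[OF k(1,2)] k(3) by simp
      obtain x y where xy: "(x,y) \<in> crossing_edges n m1 k (fst ((u@w)!k)) ((su@s)!k)" "f x = x'" "f y = y'"
      proof -
        have "(x',y') \<in> crossing_edges n m2 k' (fst ((u@w)!k)) ((su@s)!k)"
          using k'(3) nth1[OF k(1)] k(3) by simp
        from crossing_edges_shift_lift[of f k k' m1 m2, OF fk' fb' this] show ?thesis using that by blast
      qed
      have "(x,y) \<in> E1" unfolding E1_iff using xy k by blast
      moreover have "x \<notin> X" "y \<notin> X" using crossing_edges_levels[OF xy(1)] notX k by blast+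
      ultimately show ?thesis using xy state_edge_in_points[OF v1, of x y] conn_edge[of x y E1]
        unfolding E1_def P1_def by blast
    qed
  next
    fix x y assume xy: "x \<in> P1 - X" "y \<in> P1 - X" "f x = f y"
    show "(x, y) \<in> conn E1"
    proof (cases "fst x < p")
      case True then show ?thesis using pc xy p_def by blast
    next
      case False note fx = False
      show ?thesis
      proof (cases "fst y < p")
        case True then show ?thesis using pc[of y x] xy p_def conn_sym by metis
      next
        case False
        then have "x = y" using fx xy(3) fk[of "fst x" "snd x"] fk[of "fst y" "snd y"] m12 P1 xy(1,2) dp
          by (cases x; cases y) auto
        then show ?thesis by simp
      qed
    qed
  qed
  then show ?thesis unfolding fP state_loops_conn P2_def E2_def .
qed

lemma state_loops_vertical_Cons:
  assumes v: "valid_word n ((i,b)#w)" and len: "length s = length w"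
  shows "state_loops n ((i,b)#w) (False#s) = state_loops n w s"
proof -
  define f where "f = (\<lambda>(a::nat, j::nat). if a < 1 then (0, j) else (a - 1, j))"
  define g where "g = (\<lambda>(a::nat, j::nat). (0::nat, j))"
  let ?P1 = "diagram_points n ([(i,b)]@w)"
  let ?E1 = "state_edges n ([(i,b)]@w) ([False]@s)"
  have m1: "length ([(i,b)]@w) = Suc (length w)" by simp
  have f1: "f (Suc 0 mod Suc (length w), j) = (0, j)" for j
    unfolding f_def by (cases "length w") auto
  have "card ((?P1 - {}) // conn ?E1) = state_loops n ([]@w) ([]@s)"
  proof (rule card_quotient_prefix_replace[where g = g and f = f])
    show "\<And>a j. f (a, j) = (if a < length [(i, b)] then g (a, j) else (a - (length [(i, b)] - length []), j))"
      unfolding f_def g_def by simp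
  next
    fix k x y assume k: "k < length [(i, b)]"
      and e: "(x, y) \<in> crossing_edges n (length ([(i, b)] @ w)) k (fst ([(i, b)] ! k)) ([False] ! k)"
    have "f x = f y"
      using e k f1 unfolding m1
      by (cases x; cases y) (auto simp: mem_crossing_edges f_def)
    then show "(f x, f y) \<in> conn (state_edges n ([] @ w) ([] @ s))" by simp
  next
    fix x y assume x: "x \<in> ?P1 - {}" and y: "y \<in> ?P1 - {}" and x0: "fst x < length [(i, b)]"
      and fxy: "f x = f y"
    obtain j where xj: "x = (0, j)" using x0 by (cases x) auto
    obtain a j' where yj: "y = (a, j')" by (cases y)
    show "(x, y) \<in> conn ?E1"
    proof (cases "a = 0")
      case True then show ?thesis using fxy xj yj unfolding f_def by simp
    next
      case False
      then have a1: "a = 1" "j' = j" using fxy xj yj unfolding f_def by (auto split: if_splits)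
      then have mw: "1 < Suc (length w)" using y yj by simp
      have jn: "1 \<le> j" "j \<le> n" using x xj by auto
      have "(x, y) \<in> crossing_edges n (length ([(i,b)]@w)) 0 (fst (([(i,b)]@w) ! 0)) (([False]@s) ! 0)"
        using mw jn unfolding xj yj a1 m1 by (auto simp: mem_crossing_edges)
      then have "(x, y) \<in> ?E1" by (rule state_edgesI[rotated]) simp
      then show ?thesis by (rule conn_edge)
    qed
  next
    fix a j assume "(a, j) \<in> ?P1 - {}" "a < length [(i, b)]"
    then show "g (a, j) \<in> diagram_points n ([] @ w)" unfolding g_def by auto
  qed (use v len in \<open>auto simp: g_def\<close>)
  then show ?thesis by (simp add: state_loops_conn)
qed

lemma bex2I: "x \<in> A \<Longrightarrow> y \<in> A \<Longrightarrow> f x = x' \<Longrightarrow> f y = y' \<Longrightarrow> (x,y) \<in> R \<Longrightarrow>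
   \<exists>a\<in>A. \<exists>b\<in>A. f a = x' \<and> f b = y' \<and> (a,b) \<in> R"
  by blast

lemma state_loops_horizontal_Cons_Cons:
  assumes v: "valid_word n ((i,b1)#(i,b2)#w)" and len: "length s = length w"
  shows "state_loops n ((i,b1)#(i,b2)#w) (True#True#s) = Suc (state_loops n ((i,b1)#w) (True#s))"
proof -
  define f where "f = (\<lambda>(a::nat, j::nat). if a < 2 then (0, j) else (a - 1, j))"
  define g where "g = (\<lambda>(a::nat, j::nat). (0::nat, j))"
  \<comment> \<open>the small circle enclosed between the two horizontal smoothings\<close>
  define X where "X = {(1::nat, i), (1, Suc i)}"
  define m1 where "m1 = Suc (Suc (length w))"
  define m2 where "m2 = Suc (length w)"
  let ?W1 = "[(i,b1),(i,b2)]@w" and ?S1 = "[True,True]@s"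
  let ?W2 = "[(i,b1)]@w" and ?S2 = "[True]@s"
  let ?P1 = "diagram_points n ?W1"
  let ?E1 = "state_edges n ?W1 ?S1"
  let ?E2 = "state_edges n ?W2 ?S2"
  have i: "1 \<le> i" "Suc i \<le> n" using v unfolding valid_word_def by auto
  have lw1: "length ?W1 = m1" and lw2: "length ?W2 = m2" unfolding m1_def m2_def by auto
  have b1: "Suc 0 mod m1 = 1" unfolding m1_def by simp
  have b2: "Suc (Suc 0) mod m1 = 2 \<or> Suc (Suc 0) mod m1 = 0" unfolding m1_def by (cases w) auto
  have fb: "f (Suc (Suc 0) mod m1, j) = (Suc 0 mod m2, j)" for j
    unfolding f_def m1_def m2_def by (cases w) auto
  have P1: "?P1 = {0..<m1} \<times> {1..n}" unfolding diagram_points_def lw1 m1_def by auto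
  have E1_0: "e \<in> ?E1" if "e \<in> crossing_edges n m1 0 i True" for e
    using state_edgesI[of 0 ?W1 e n ?S1] that lw1 m1_def by simp
  have E1_1: "e \<in> ?E1" if "e \<in> crossing_edges n m1 1 i True" for e
    using state_edgesI[of 1 ?W1 e n ?S1] that lw1 m1_def by simp
  have E2_0: "e \<in> ?E2" if "e \<in> crossing_edges n m2 0 i True" for e
    using state_edgesI[of 0 ?W2 e n ?S2] that lw2 m2_def by simp
  have Xcl: "(x \<in> X) = (y \<in> X)" if e: "(x,y) \<in> ?E1" for x y
  proof -
    obtain k where k0: "k < length ?W1" "(x,y) \<in> crossing_edges n (length ?W1) k (fst (?W1 ! k)) (?S1 ! k)"
      by (rule state_edgesE[OF e])
    then have k: "k < m1" "(x,y) \<in> crossing_edges n m1 k (fst (?W1 ! k)) (?S1 ! k)" unfolding lw1 .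
    show ?thesis
    proof (cases "k < 2")
      case True
      then have "k = 0 \<or> k = 1" by auto
      then show ?thesis using k b1 b2 unfolding X_def
        by (cases x; cases y) (auto simp: mem_crossing_edges)
    next
      case False
      have "fst x \<noteq> 1" "fst y \<noteq> 1" using crossing_edges_levels[OF k(2)] Suc_mod_cases[OF k(1)] False by auto
      then show ?thesis unfolding X_def by auto
    qed
  qed
  have XP: "X \<subseteq> ?P1" unfolding X_def P1 m1_def using i by auto
  have Xconn: "(x,y) \<in> conn ?E1" if "x \<in> X" "y \<in> X" for x y
  proof -
    have "((1,i),(1,Suc i)) \<in> ?E1" by (rule E1_0) (simp add: mem_crossing_edges b1 m1_def)
    then show ?thesis using that unfolding X_def using conn_edge conn_edge_converse by fastforce
  qed
  have x1X: "(1,i) \<in> X" unfolding X_def by simp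
  have cls: "conn ?E1 `` {(1,i)} = X" by (rule conn_Image_eq_closed[OF Xcl Xconn x1X])
  have c1: "card (?P1 // conn ?E1) = Suc (card ((?P1 - X) // conn ?E1))"
    by (rule card_quotient_remove_class[OF finite_diagram_points _ cls[symmetric] XP]) (use XP X_def in auto)
  have "card ((?P1 - X) // conn ?E1) = state_loops n ?W2 ?S2"
  proof (rule card_quotient_prefix_replace[where g = g and f = f])
    show "\<And>a j. f (a, j) = (if a < length [(i, b1),(i,b2)] then g (a, j) else (a - (length [(i, b1),(i,b2)] - length [(i,b1)]), j))"
      unfolding f_def g_def by simp
  next
    fix k x y assume k: "k < length [(i, b1),(i,b2)]"
      and e: "(x, y) \<in> crossing_edges n (length ?W1) k (fst ([(i, b1),(i,b2)] ! k)) ([True,True] ! k)"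
    have "k = 0 \<or> k = 1" using k by auto
    then have "(x,y) \<in> ?E1" using e E1_0[of "(x,y)"] E1_1[of "(x,y)"] by (auto simp: m1_def)
    then show "(x \<in> X) = (y \<in> X)" by (rule Xcl)
  next
    fix k x y assume k: "k < length [(i, b1),(i,b2)]"
      and e: "(x, y) \<in> crossing_edges n (length ?W1) k (fst ([(i, b1),(i,b2)] ! k)) ([True,True] ! k)"
      and xX: "x \<notin> X"
    obtain k1 j1 k2 j2 where xy: "x = (k1,j1)" "y = (k2,j2)" by (cases x; cases y)
    have "k = 0 \<or> k = 1" using k by auto
    then show "(f x, f y) \<in> conn ?E2"
    proof
      assume k0: "k = 0"
      have "f x = f y \<or> (f x, f y) \<in> crossing_edges n m2 0 i True"
        using e xX unfolding k0 lw1 xy X_def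
        by (auto simp: mem_crossing_edges f_def b1 of_bool_def split: if_splits)
      then show ?thesis by (metis conn_refl conn_edge E2_0)
    next
      assume k0: "k = 1"
      have "f x = f y \<or> (f x, f y) \<in> crossing_edges n m2 0 i True"
        using e xX fb unfolding k0 lw1 xy X_def
        by (auto simp: mem_crossing_edges f_def b1 m1_def m2_def)
      then show ?thesis by (metis conn_refl conn_edge E2_0)
    qed
  next
    fix k x' y' assume k: "k < length [(i,b1)]"
      and e: "(x', y') \<in> crossing_edges n (length ?W2) k (fst ([(i,b1)] ! k)) ([True] ! k)"
    have k0: "k = 0" using k by simp
    obtain k1 j1 k2 j2 where xy: "x' = (k1,j1)" "y' = (k2,j2)" by (cases x'; cases y')
    have m1b: "Suc (Suc 0) mod m1 < m1" unfolding m1_def by simp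
    have ee: "(k1 = 0 \<and> k2 = Suc 0 mod m2 \<and> j2 = j1 \<and> 1 \<le> j1 \<and> j1 \<le> n \<and> j1 \<noteq> i \<and> j1 \<noteq> Suc i) \<or>
       (j1 = i \<and> j2 = Suc i \<and> k2 = k1 \<and> k1 = 0) \<or> (j1 = i \<and> j2 = Suc i \<and> k2 = k1 \<and> k1 = Suc 0 mod m2)"
      using e unfolding k0 lw2 xy mem_crossing_edges by auto
    from ee show "\<exists>x\<in>?P1 - X. \<exists>y\<in>?P1 - X. f x = x' \<and> f y = y' \<and> (x,y) \<in> conn ?E1"
    proof (elim disjE conjE)
      assume h: "k1 = 0" "k2 = Suc 0 mod m2" "j2 = j1" "1 \<le> j1" "j1 \<le> n" "j1 \<noteq> i" "j1 \<noteq> Suc i"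
      have e1: "((0,j1),(1,j1)) \<in> ?E1" by (rule E1_0) (use h in \<open>simp add: mem_crossing_edges b1 m1_def\<close>)
      have e2: "((1,j1),(Suc (Suc 0) mod m1,j1)) \<in> ?E1" by (rule E1_1) (use h in \<open>simp add: mem_crossing_edges\<close>)
      have c: "((0,j1),(Suc (Suc 0) mod m1,j1)) \<in> conn ?E1" by (rule conn_trans[OF conn_edge[OF e1] conn_edge[OF e2]])
      have p: "(0,j1) \<in> ?P1 - X" "(Suc (Suc 0) mod m1,j1) \<in> ?P1 - X"
        using h m1b b2 unfolding P1 X_def m1_def by auto
      have fx: "f (0,j1) = x'" "f (Suc (Suc 0) mod m1,j1) = y'" using fb h xy unfolding f_def by auto
      show ?thesis by (rule bex2I[OF p fx c])
    next
      assume h: "j1 = i" "j2 = Suc i" "k2 = k1" "k1 = 0"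
      have e: "((0,i),(0,Suc i)) \<in> ?E1" by (rule E1_0) (simp add: mem_crossing_edges)
      have p: "(0,i) \<in> ?P1 - X" "(0,Suc i) \<in> ?P1 - X"
        using i unfolding P1 X_def m1_def by auto
      have fx: "f (0,i) = x'" "f (0,Suc i) = y'" using h xy unfolding f_def by auto
      show ?thesis by (rule bex2I[OF p fx conn_edge[OF e]])
    next
      assume h: "j1 = i" "j2 = Suc i" "k2 = k1" "k1 = Suc 0 mod m2"
      have e: "((Suc (Suc 0) mod m1,i),(Suc (Suc 0) mod m1,Suc i)) \<in> ?E1" by (rule E1_1) (simp add: mem_crossing_edges)
      have p: "(Suc (Suc 0) mod m1,i) \<in> ?P1 - X" "(Suc (Suc 0) mod m1,Suc i) \<in> ?P1 - X"
        using i m1b b2 unfolding P1 X_def m1_def by auto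
      have fx: "f (Suc (Suc 0) mod m1,i) = x'" "f (Suc (Suc 0) mod m1,Suc i) = y'" using h xy fb by auto
      show ?thesis by (rule bex2I[OF p fx conn_edge[OF e]])
    qed
  next
    fix x y assume x: "x \<in> ?P1 - X" and y: "y \<in> ?P1 - X" and x0: "fst x < length [(i,b1),(i,b2)]"
      and fxy: "f x = f y"
    obtain a j where xj: "x = (a, j)" by (cases x)
    obtain a' j' where yj: "y = (a', j')" by (cases y)
    have a: "a < 2" using x0 xj by simp
    have a': "a' < 2" "j' = j" using fxy a xj yj unfolding f_def by (auto split: if_splits)
    have jn: "1 \<le> j" "j \<le> n" using x xj P1 by auto
    show "(x, y) \<in> conn ?E1"
    proof (cases "a = a'")
      case True then show ?thesis using xj yj a' by simp
    next
      case False
      then have "(a = 0 \<and> a' = 1) \<or> (a = 1 \<and> a' = 0)" using a a' by auto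
      moreover have "j \<noteq> i" "j \<noteq> Suc i" using x y xj yj a' \<open>(a = 0 \<and> a' = 1) \<or> (a = 1 \<and> a' = 0)\<close>
        unfolding X_def by auto
      moreover have "((0,j),(1,j)) \<in> ?E1" by (rule E1_0) (use jn calculation(2,3) in \<open>simp add: mem_crossing_edges b1 m1_def\<close>)
      ultimately show ?thesis using xj yj a' conn_edge conn_edge_converse by auto
    qed
  next
    fix a j assume "(a, j) \<in> ?P1 - X" "a < length [(i, b1),(i,b2)]"
    then show "g (a, j) \<in> diagram_points n ?W2" unfolding g_def by auto
  next
    fix a j assume aj: "(a, j) \<in> diagram_points n ?W2" "a < length [(i,b1)]"
    then have "(a,j) = f (0,j)" "(0,j) \<in> ?P1 - X" unfolding f_def X_def P1 m1_def by auto
    then show "(a, j) \<in> f ` (?P1 - X)" by blast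
  next
    fix a j assume "(a, j) \<in> X" then show "0 < a \<and> a < length [(i, b1),(i,b2)]" unfolding X_def by auto
  qed (use v len in \<open>auto simp: g_def\<close>)
  then show ?thesis using c1 by (simp add: state_loops_conn)
qed

section \<open>Temperley-Lieb words\<close>

text \<open>The generators carrying a horizontal smoothing, read as a word in the Temperley-Lieb
  generators e_i.\<close>

fun tl_word :: "braid_word \<Rightarrow> bool list \<Rightarrow> nat list" where
  "tl_word (x#w) (True#s) = fst x # tl_word w s"
| "tl_word (x#w) (False#s) = tl_word w s"
| "tl_word _ _ = []"

definition tl_loops :: "nat \<Rightarrow> nat list \<Rightarrow> nat" where
  "tl_loops n xs = state_loops n (map (\<lambda>i. (i, True)) xs) (replicate (length xs) True)"

definition valid_letters :: "nat \<Rightarrow> nat list \<Rightarrow> bool" where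
  "valid_letters n xs \<longleftrightarrow> (\<forall>i\<in>set xs. 1 \<le> i \<and> Suc i \<le> n)"

lemma valid_word_tl_letters: "valid_word n (map (\<lambda>i. (i, True)) xs) = valid_letters n xs"
  unfolding valid_word_def valid_letters_def by auto

lemma tl_loops_rotate:
  assumes "valid_letters n (xs @ ys)"
  shows "tl_loops n (xs @ ys) = tl_loops n (ys @ xs)"
proof -
  have "state_loops n (map (\<lambda>i. (i, True)) xs @ map (\<lambda>i. (i, True)) ys)
         (replicate (length xs) True @ replicate (length ys) True)
      = state_loops n (map (\<lambda>i. (i, True)) ys @ map (\<lambda>i. (i, True)) xs)
         (replicate (length ys) True @ replicate (length xs) True)"
    by (rule state_loops_rotate) (use assms valid_word_tl_letters[of n "xs@ys"] in auto)
  moreover have "replicate (length xs) True @ replicate (length ys) True = replicate (length (xs @ ys)) True"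
    by (simp add: replicate_add)
  moreover have "replicate (length ys) True @ replicate (length xs) True = replicate (length (ys @ xs)) True"
    by (simp add: replicate_add)
  ultimately show ?thesis unfolding tl_loops_def by (simp only: map_append)
qed

lemma set_tl_word: "set (tl_word w s) \<subseteq> fst ` set w"
proof (induction w s rule: tl_word.induct)
  case (1 x w s) then show ?case by auto
next
  case (2 x w s) then show ?case by auto
qed simp_all

lemma valid_letters_tl_word: "valid_word n w \<Longrightarrow> valid_letters n (tl_word w s)"
  using set_tl_word[of w s] unfolding valid_word_def valid_letters_def by blast

lemma state_loops_append_tl_word:
  assumes "valid_word n w" "length s = length w" "valid_letters n acc"
  shows "state_loops n (w @ map (\<lambda>i. (i, True)) acc) (s @ replicate (length acc) True)
         = tl_loops n (tl_word w s @ acc)"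
  using assms
proof (induction w s arbitrary: acc rule: tl_word.induct)
  case (1 x w s)
  obtain i b where x: "x = (i, b)" by (cases x)
  have vi: "1 \<le> i" "Suc i \<le> n" using 1(2) x unfolding valid_word_def by auto
  have "state_loops n ((x#w) @ map (\<lambda>i. (i, True)) acc) ((True#s) @ replicate (length acc) True)
      = state_loops n ([x] @ (w @ map (\<lambda>i. (i, True)) acc)) ([True] @ (s @ replicate (length acc) True))"
    by simp
  also have "\<dots> = state_loops n ((w @ map (\<lambda>i. (i, True)) acc) @ [x]) ((s @ replicate (length acc) True) @ [True])"
    by (rule state_loops_rotate) (use 1(2,3,4) in \<open>auto simp: valid_word_def valid_letters_def\<close>)
  also have "\<dots> = state_loops n (w @ map (\<lambda>i. (i, True)) (acc @ [i])) (s @ replicate (length (acc @ [i])) True)"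
  proof -
    have s: "(s @ replicate (length acc) True) @ [True] = s @ replicate (length (acc @ [i])) True"
      by (simp add: replicate_append_same)
    show ?thesis unfolding s by (rule state_loops_cong_generators) (simp add: x)
  qed
  also have "\<dots> = tl_loops n (tl_word w s @ acc @ [i])"
    by (rule "1.IH") (use 1(2,3,4) vi in \<open>auto simp: valid_word_def valid_letters_def\<close>)
  also have "\<dots> = tl_loops n (i # tl_word w s @ acc)"
  proof -
    have vw: "valid_word n w" using 1(2) by (simp add: valid_word_def)
    have "valid_letters n ((tl_word w s @ acc) @ [i])" using valid_letters_tl_word[OF vw, of s] 1(4) vi
      unfolding valid_letters_def by auto
    from tl_loops_rotate[OF this] show ?thesis by simp
  qed
  finally show ?case using x by simp
next
  case (2 x w s)
  obtain i b where x: "x = (i, b)" by (cases x)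
  have "state_loops n ((x#w) @ map (\<lambda>i. (i, True)) acc) ((False#s) @ replicate (length acc) True)
      = state_loops n ((i,b) # (w @ map (\<lambda>i. (i, True)) acc)) (False # (s @ replicate (length acc) True))"
    using x by simp
  also have "\<dots> = state_loops n (w @ map (\<lambda>i. (i, True)) acc) (s @ replicate (length acc) True)"
    by (rule state_loops_vertical_Cons) (use 2(2,3,4) x in \<open>auto simp: valid_word_def valid_letters_def\<close>)
  also have "\<dots> = tl_loops n (tl_word w s @ acc)"
    using 2 by (auto simp: valid_word_def)
  finally show ?case by simp
next
  case ("3_1" s)
  then show ?case by (simp add: tl_loops_def)
next
  case ("3_2" v va)
  then show ?case by (simp add: tl_loops_def)
qed simp_all

lemma state_loops_eq_tl_loops:
  assumes "valid_word n w" "length s = length w"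
  shows "state_loops n w s = tl_loops n (tl_word w s)"
  using state_loops_append_tl_word[OF assms, of "[]"] by (simp add: valid_letters_def)

lemma tl_loops_Cons_Cons:
  assumes "valid_letters n (i#xs)"
  shows "tl_loops n (i#i#xs) = Suc (tl_loops n (i#xs))"
proof -
  have "state_loops n ((i,True)#(i,True)#map (\<lambda>i. (i, True)) xs) (True#True#replicate (length xs) True)
      = Suc (state_loops n ((i,True)#map (\<lambda>i. (i, True)) xs) (True#replicate (length xs) True))"
    by (rule state_loops_horizontal_Cons_Cons) (use assms in \<open>auto simp: valid_word_def valid_letters_def\<close>)
  then show ?thesis unfolding tl_loops_def by simp
qed

lemma tl_word_append:
  "length s1 = length w1 \<Longrightarrow> tl_word (w1 @ w2) (s1 @ s2) = tl_word w1 s1 @ tl_word w2 s2"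
proof (induction w1 s1 rule: list_induct2')
  case (4 x xs y ys) then show ?case by (cases y) simp_all
qed simp_all

lemma tl_loops_Nil: "tl_loops 3 [] = 3"
proof -
  have "state_edges 3 [] [] = {}" unfolding state_edges_def by simp
  moreover have "diagram_points 3 [] = {(0,1),(0,2),(0,3)}" unfolding diagram_points_def by auto
  moreover have "{(0::nat,1::nat),(0,2),(0,3)} // Id = {{(0,1)},{(0,2)},{(0,3)}}"
    unfolding quotient_def by auto
  ultimately show ?thesis unfolding tl_loops_def state_loops_conn by (simp add: conn_empty)
qed

lemma tl_loops_single:
  assumes "i = 1 \<or> i = 2"
  shows "tl_loops 3 [i] = 2"
proof -
  let ?E = "state_edges 3 [(i,True)] [True]"
  let ?P = "diagram_points 3 [(i,True)]"
  define oo where "oo = (if i = 1 then 3 else 1::nat)"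
  define X where "X = {(0::nat, i), (0, Suc i)}"
  have E: "e \<in> ?E \<longleftrightarrow> e \<in> crossing_edges 3 1 0 i True" for e
    unfolding mem_state_edges by simp
  have P: "?P = {(0,1),(0,2),(0,3)}" unfolding diagram_points_def by auto
  have Xcl: "(x \<in> X) = (y \<in> X)" if "(x,y) \<in> ?E" for x y
    using that assms unfolding E X_def by (cases x; cases y) (auto simp: mem_crossing_edges)
  have Xco: "(x,y) \<in> conn ?E" if "x \<in> X" "y \<in> X" for x y
  proof -
    have "((0,i),(0,Suc i)) \<in> ?E" unfolding E by (simp add: mem_crossing_edges)
    then show ?thesis using that unfolding X_def by (auto intro: conn_edge conn_edge_converse)
  qed
  have x0: "(0,i) \<in> X" unfolding X_def by simp
  have cls: "conn ?E `` {(0,i)} = X" by (rule conn_Image_eq_closed[OF Xcl Xco x0])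
  have "card (?P // conn ?E) = Suc (card ((?P - X) // conn ?E))"
    by (rule card_quotient_remove_class[OF finite_diagram_points _ cls[symmetric]]) (use assms in \<open>auto simp: P X_def\<close>)
  moreover have "?P - X = {(0,oo)}" using assms unfolding P X_def oo_def by auto
  moreover have "card ({(0,oo)} // conn ?E) = 1" by (rule card_quotient_conn_eq_1) auto
  ultimately show ?thesis unfolding tl_loops_def state_loops_conn by simp
qed

lemma tl_loops_12: "tl_loops 3 [1,2] = 1"
proof -
  let ?E = "state_edges 3 [(1,True),(2,True)] [True,True]"
  let ?P = "diagram_points 3 [(1,True),(2,True)]"
  have e0: "e \<in> ?E" if "e \<in> crossing_edges 3 2 0 1 True" for e
    using state_edgesI[of 0 "[(1::nat,True),(2,True)]" e 3 "[True,True]"] that by (simp add: eval_nat_numeral)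
  have e1: "e \<in> ?E" if "e \<in> crossing_edges 3 2 1 2 True" for e
    using state_edgesI[of 1 "[(1::nat,True),(2,True)]" e 3 "[True,True]"] that by (simp add: eval_nat_numeral)
  have c: "((0,1), z) \<in> conn ?E" if "z \<in> ?P" for z
  proof -
    have a: "((0,1),(0,2)) \<in> conn ?E" by (rule conn_edge, rule e0) (simp add: mem_crossing_edges)
    have b: "((0,1),(0,3)) \<in> conn ?E" by (rule conn_step[OF a], rule disjI1, rule e1) (simp add: mem_crossing_edges)
    have d: "((0,1),(1,1)) \<in> conn ?E" by (rule conn_step[OF conn_refl], rule disjI2, rule e1) (simp add: mem_crossing_edges)
    have f: "((0,1),(1,2)) \<in> conn ?E" by (rule conn_step[OF d], rule disjI1, rule e0) (simp add: mem_crossing_edges)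
    have g: "((0,1),(1,3)) \<in> conn ?E" by (rule conn_step[OF b], rule disjI1, rule e0) (simp add: mem_crossing_edges)
    obtain a j where z: "z = (a,j)" by (cases z)
    have "a < 2" "1 \<le> j" "j \<le> 3" using that z by (auto simp: diagram_points_def)
    then have "a = 0 \<or> a = 1" "j = 1 \<or> j = 2 \<or> j = 3" by auto
    then show ?thesis unfolding z using a b d f g by (elim disjE) simp_all
  qed
  show ?thesis unfolding tl_loops_def state_loops_conn
    by (rule card_quotient_conn_eq_1[of "(0,1)"]) (use c in auto)
qed

lemma tl_loops_1212: "tl_loops 3 [1,2,1,2] = 1"
proof -
  let ?W = "[(1::nat,True),(2,True),(1,True),(2,True)]"
  let ?E = "state_edges 3 ?W [True,True,True,True]"
  let ?P = "diagram_points 3 ?W"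
  have e0: "e \<in> ?E" if "e \<in> crossing_edges 3 4 0 1 True" for e
    using state_edgesI[of 0 ?W e 3 "[True,True,True,True]"] that by (simp add: eval_nat_numeral)
  have e1: "e \<in> ?E" if "e \<in> crossing_edges 3 4 1 2 True" for e
    using state_edgesI[of 1 ?W e 3 "[True,True,True,True]"] that by (simp add: eval_nat_numeral)
  have e2: "e \<in> ?E" if "e \<in> crossing_edges 3 4 2 1 True" for e
    using state_edgesI[of 2 ?W e 3 "[True,True,True,True]"] that by (simp add: eval_nat_numeral)
  have e3: "e \<in> ?E" if "e \<in> crossing_edges 3 4 3 2 True" for e
    using state_edgesI[of 3 ?W e 3 "[True,True,True,True]"] that by (simp add: eval_nat_numeral)
  have c: "((0,1), z) \<in> conn ?E" if "z \<in> ?P" for z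
  proof -
    have p02: "((0,1),(0,2)) \<in> conn ?E" by (rule conn_edge, rule e0) (simp add: mem_crossing_edges)
    have p03: "((0,1),(0,3)) \<in> conn ?E" by (rule conn_step[OF p02], rule disjI1, rule e3) (simp add: mem_crossing_edges)
    have p13: "((0,1),(1,3)) \<in> conn ?E" by (rule conn_step[OF p03], rule disjI1, rule e0) (simp add: mem_crossing_edges)
    have p12: "((0,1),(1,2)) \<in> conn ?E" by (rule conn_step[OF p13], rule disjI2, rule e1) (simp add: mem_crossing_edges)
    have p11: "((0,1),(1,1)) \<in> conn ?E" by (rule conn_step[OF p12], rule disjI2, rule e0) (simp add: mem_crossing_edges)
    have p21: "((0,1),(2,1)) \<in> conn ?E" by (rule conn_step[OF p11], rule disjI1, rule e1) (simp add: mem_crossing_edges)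
    have p22: "((0,1),(2,2)) \<in> conn ?E" by (rule conn_step[OF p21], rule disjI1, rule e2) (simp add: mem_crossing_edges)
    have p23: "((0,1),(2,3)) \<in> conn ?E" by (rule conn_step[OF p22], rule disjI1, rule e1) (simp add: mem_crossing_edges)
    have p33: "((0,1),(3,3)) \<in> conn ?E" by (rule conn_step[OF p23], rule disjI1, rule e2) (simp add: mem_crossing_edges)
    have p32: "((0,1),(3,2)) \<in> conn ?E" by (rule conn_step[OF p33], rule disjI2, rule e3) (simp add: mem_crossing_edges)
    have p31: "((0,1),(3,1)) \<in> conn ?E" by (rule conn_step[OF p32], rule disjI2, rule e2) (simp add: mem_crossing_edges)
    obtain a j where z: "z = (a,j)" by (cases z)
    have "a < 4" "1 \<le> j" "j \<le> 3" using that z by (auto simp: diagram_points_def)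
    then have "a = 0 \<or> a = 1 \<or> a = 2 \<or> a = 3" "j = 1 \<or> j = 2 \<or> j = 3" by auto
    then show ?thesis unfolding z using p02 p03 p13 p12 p11 p21 p22 p23 p33 p32 p31
      by (elim disjE) simp_all
  qed
  show ?thesis unfolding tl_loops_def state_loops_conn
    by (rule card_quotient_conn_eq_1[of "(0,1)"]) (use c in auto)
qed

lemma valid_letters_3: "valid_letters 3 xs \<longleftrightarrow> (\<forall>x\<in>set xs. x = 1 \<or> x = 2)"
  unfolding valid_letters_def by (auto simp: le_Suc_eq)

lemma tl_loops_replicate_Cons:
  assumes "i = 1 \<or> i = 2" "valid_letters 3 ys"
  shows "tl_loops 3 (i # replicate j i @ ys) = j + tl_loops 3 (i # ys)"
proof (induction j)
  case 0 then show ?case by simp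
next
  case (Suc j)
  have "tl_loops 3 (i # replicate (Suc j) i @ ys) = tl_loops 3 (i # i # (replicate j i @ ys))" by simp
  also have "\<dots> = Suc (tl_loops 3 (i # (replicate j i @ ys)))"
    by (rule tl_loops_Cons_Cons) (use assms in \<open>auto simp: valid_letters_3\<close>)
  finally show ?case using Suc by simp
qed

definition collapse_block :: "nat \<Rightarrow> nat \<Rightarrow> nat list" where
  "collapse_block j i = (if j = 0 then [] else [i])"

lemma tl_loops_replicate:
  assumes "i = 1 \<or> i = 2" "valid_letters 3 ys"
  shows "tl_loops 3 (replicate j i @ ys) = (j - 1) + tl_loops 3 (collapse_block j i @ ys)"
proof (cases j)
  case 0 then show ?thesis by (simp add: collapse_block_def)
next
  case (Suc j')
  then show ?thesis using tl_loops_replicate_Cons[OF assms, of j'] by (simp add: collapse_block_def)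
qed

lemma valid_letters_collapse_block: "i = 1 \<or> i = 2 \<Longrightarrow> valid_letters 3 (collapse_block j i)"
  unfolding collapse_block_def valid_letters_3 by auto

lemma valid_letters_replicate: "i = 1 \<or> i = 2 \<Longrightarrow> valid_letters 3 (replicate j i)"
  unfolding valid_letters_3 by auto

lemma valid_letters_append: "valid_letters n (xs @ ys) = (valid_letters n xs \<and> valid_letters n ys)"
  unfolding valid_letters_def by auto

lemma tl_loops_four_blocks:
  "tl_loops 3 (replicate j1 1 @ replicate j2 2 @ replicate j3 1 @ replicate j4 2)
   = (j1 - 1) + (j2 - 1) + (j3 - 1) + (j4 - 1)
     + tl_loops 3 (collapse_block j1 1 @ collapse_block j2 2 @ collapse_block j3 1 @ collapse_block j4 2)"
proof -
  have v1: "valid_letters 3 (replicate j 1)" "valid_letters 3 (collapse_block j 1)" for j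
    by (simp_all add: valid_letters_replicate valid_letters_collapse_block)
  have v2: "valid_letters 3 (replicate j 2)" "valid_letters 3 (collapse_block j 2)" for j
    by (simp_all add: valid_letters_replicate valid_letters_collapse_block)
  note vs = v1 v2 valid_letters_append valid_letters_3 collapse_block_def
  let ?R1 = "replicate j1 (1::nat)" and ?R2 = "replicate j2 (2::nat)"
    and ?R3 = "replicate j3 (1::nat)" and ?R4 = "replicate j4 (2::nat)"
  let ?C1 = "collapse_block j1 1" and ?C2 = "collapse_block j2 2"
    and ?C3 = "collapse_block j3 1" and ?C4 = "collapse_block j4 2"
  have "tl_loops 3 (?R1 @ ?R2 @ ?R3 @ ?R4) = (j1 - 1) + tl_loops 3 (?C1 @ ?R2 @ ?R3 @ ?R4)"
    by (rule tl_loops_replicate) (simp_all add: vs)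
  also have "tl_loops 3 (?C1 @ (?R2 @ ?R3 @ ?R4)) = tl_loops 3 (?R2 @ (?R3 @ ?R4 @ ?C1))"
    using tl_loops_rotate[of 3 ?C1 "?R2 @ ?R3 @ ?R4"] by (simp add: vs)
  also have "\<dots> = (j2 - 1) + tl_loops 3 (?C2 @ ?R3 @ ?R4 @ ?C1)"
    by (rule tl_loops_replicate) (simp_all add: vs)
  also have "tl_loops 3 (?C2 @ (?R3 @ ?R4 @ ?C1)) = tl_loops 3 (?R3 @ (?R4 @ ?C1 @ ?C2))"
    using tl_loops_rotate[of 3 ?C2 "?R3 @ ?R4 @ ?C1"] by (simp add: vs)
  also have "\<dots> = (j3 - 1) + tl_loops 3 (?C3 @ ?R4 @ ?C1 @ ?C2)"
    by (rule tl_loops_replicate) (simp_all add: vs)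
  also have "tl_loops 3 (?C3 @ (?R4 @ ?C1 @ ?C2)) = tl_loops 3 (?R4 @ (?C1 @ ?C2 @ ?C3))"
    using tl_loops_rotate[of 3 ?C3 "?R4 @ ?C1 @ ?C2"] by (simp add: vs)
  also have "\<dots> = (j4 - 1) + tl_loops 3 (?C4 @ ?C1 @ ?C2 @ ?C3)"
    by (rule tl_loops_replicate) (simp_all add: vs)
  also have "tl_loops 3 (?C4 @ (?C1 @ ?C2 @ ?C3)) = tl_loops 3 (?C1 @ ?C2 @ ?C3 @ ?C4)"
    using tl_loops_rotate[of 3 ?C4 "?C1 @ ?C2 @ ?C3"] by (simp add: vs)
  finally show ?thesis by simp
qed

lemma tl_loops_1: "tl_loops 3 [1] = 2" by (rule tl_loops_single) simp

lemma tl_loops_2: "tl_loops 3 [2] = 2" by (rule tl_loops_single) simp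

lemma tl_loops_21: "tl_loops 3 [2,1] = 1"
  using tl_loops_rotate[of 3 "[2]" "[1]"] tl_loops_12 by (simp add: valid_letters_3)

lemma tl_loops_11: "tl_loops 3 [1,1] = 3"
  using tl_loops_Cons_Cons[of 3 1 "[]"] tl_loops_1 by (simp add: valid_letters_3)

lemma tl_loops_22: "tl_loops 3 [2,2] = 3"
  using tl_loops_Cons_Cons[of 3 2 "[]"] tl_loops_2 by (simp add: valid_letters_3)

lemma tl_loops_112: "tl_loops 3 [1,1,2] = 2"
  using tl_loops_Cons_Cons[of 3 1 "[2]"] tl_loops_12 by (simp add: valid_letters_3)

lemma tl_loops_221: "tl_loops 3 [2,2,1] = 2"
  using tl_loops_Cons_Cons[of 3 2 "[1]"] tl_loops_21 by (simp add: valid_letters_3)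

lemma tl_loops_121: "tl_loops 3 [1,2,1] = 2"
  using tl_loops_rotate[of 3 "[1,2]" "[1]"] tl_loops_112 by (simp add: valid_letters_3)

lemma tl_loops_122: "tl_loops 3 [1,2,2] = 2"
  using tl_loops_rotate[of 3 "[1]" "[2,2]"] tl_loops_221 by (simp add: valid_letters_3)

lemma tl_loops_212: "tl_loops 3 [2,1,2] = 2"
  using tl_loops_rotate[of 3 "[2,1]" "[2]"] tl_loops_221 by (simp add: valid_letters_3)

definition block_loops :: "bool \<Rightarrow> bool \<Rightarrow> bool \<Rightarrow> bool \<Rightarrow> nat" where
  "block_loops n1 n2 n3 n4 = (if \<not> n1 \<and> \<not> n2 \<and> \<not> n3 \<and> \<not> n4 then 3
     else if (\<not> n2 \<and> \<not> n4) \<or> (\<not> n1 \<and> \<not> n3) then of_bool n1 + of_bool n2 + of_bool n3 + of_bool n4 + 1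
     else if n1 \<and> n2 \<and> n3 \<and> n4 then 1 else of_bool n1 + of_bool n2 + of_bool n3 + of_bool n4 - 1)"

lemma block_loops_pos: "1 \<le> block_loops n1 n2 n3 n4"
  unfolding block_loops_def by auto

lemma tl_loops_collapsed_blocks:
  "tl_loops 3 (collapse_block j1 1 @ collapse_block j2 2 @ collapse_block j3 1 @ collapse_block j4 2)
   = block_loops (j1 \<noteq> 0) (j2 \<noteq> 0) (j3 \<noteq> 0) (j4 \<noteq> 0)"
  unfolding collapse_block_def block_loops_def
  by (cases "j1 = 0"; cases "j2 = 0"; cases "j3 = 0"; cases "j4 = 0")
     (simp_all add: tl_loops_Nil[simplified] tl_loops_1[simplified] tl_loops_2[simplified]
        tl_loops_12[simplified] tl_loops_21[simplified] tl_loops_11[simplified] tl_loops_22[simplified]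
        tl_loops_112[simplified] tl_loops_221[simplified] tl_loops_121[simplified]
        tl_loops_122[simplified] tl_loops_212[simplified] tl_loops_1212[simplified])

section \<open>The state sum of the four-block braid\<close>

definition hcount :: "bool list \<Rightarrow> nat" where "hcount s = length (filter id s)"

lemma tl_word_replicate: "length s = n \<Longrightarrow> tl_word (replicate n x) s = replicate (hcount s) (fst x)"
proof (induction s arbitrary: n)
  case Nil then show ?case by (simp add: hcount_def)
next
  case (Cons h s)
  then obtain n' where n: "n = Suc n'" by (cases n) auto
  then show ?case using Cons by (cases h) (simp_all add: hcount_def)
qed

lemma valid_word_four_blocks: "valid_word 3 (sigma_pow 1 a @ sigma_pow 2 b @ sigma_pow 1 c @ sigma_pow 2 d)"
  unfolding valid_word_def sigma_pow_def by auto

lemma length_sigma_pow[simp]: "length (sigma_pow i k) = nat \<bar>k\<bar>"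
  unfolding sigma_pow_def by simp

lemma state_loops_four_blocks:
  assumes l: "length s1 = nat \<bar>a\<bar>" "length s2 = nat \<bar>b\<bar>" "length s3 = nat \<bar>c\<bar>" "length s4 = nat \<bar>d\<bar>"
  shows "state_loops 3 (sigma_pow 1 a @ sigma_pow 2 b @ sigma_pow 1 c @ sigma_pow 2 d) (s1 @ s2 @ s3 @ s4)
    = (hcount s1 - 1) + (hcount s2 - 1) + (hcount s3 - 1) + (hcount s4 - 1)
      + block_loops (hcount s1 \<noteq> 0) (hcount s2 \<noteq> 0) (hcount s3 \<noteq> 0) (hcount s4 \<noteq> 0)"
proof -
  have "tl_word (sigma_pow 1 a @ sigma_pow 2 b @ sigma_pow 1 c @ sigma_pow 2 d) (s1 @ s2 @ s3 @ s4)
      = replicate (hcount s1) 1 @ replicate (hcount s2) 2 @ replicate (hcount s3) 1 @ replicate (hcount s4) 2"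
    using l by (simp add: tl_word_append tl_word_replicate sigma_pow_def)
  then show ?thesis
    by (subst state_loops_eq_tl_loops[OF valid_word_four_blocks]) (use l in \<open>simp_all add: tl_loops_four_blocks[simplified] tl_loops_collapsed_blocks[simplified]\<close>)
qed

text \<open>For a state in which block i has a horizontal smoothing iff \<open>\<not> z\<^sub>i\<close>, the number of
  circles minus one exceeds the number of horizontal smoothings by this amount.\<close>

definition loop_excess :: "bool \<Rightarrow> bool \<Rightarrow> bool \<Rightarrow> bool \<Rightarrow> int" where
  "loop_excess z1 z2 z3 z4 = int (block_loops (\<not> z1) (\<not> z2) (\<not> z3) (\<not> z4)) - 1
     - (of_bool (\<not> z1) + of_bool (\<not> z2) + of_bool (\<not> z3) + of_bool (\<not> z4))"

lemma even_loop_excess: "even (loop_excess z1 z2 z3 z4)"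
  unfolding loop_excess_def block_loops_def by (cases z1; cases z2; cases z3; cases z4) simp_all

abbreviation bool_lists :: "nat \<Rightarrow> bool list set" where "bool_lists n \<equiv> {s. length s = n}"

lemma finite_bool_lists: "finite (bool_lists n)"
  using finite_lists_length_eq[of "UNIV :: bool set" n] by simp

lemma sum_bool_lists_append:
  "(\<Sum>s\<in>bool_lists (m + n). F s) = (\<Sum>s1\<in>bool_lists m. \<Sum>s2\<in>bool_lists n. F (s1 @ s2))"
proof -
  have img: "(\<lambda>(x,y). x @ y) ` (bool_lists m \<times> bool_lists n) = bool_lists (m + n)"
  proof
    show "(\<lambda>(x,y). x @ y) ` (bool_lists m \<times> bool_lists n) \<subseteq> bool_lists (m + n)" by auto
    show "bool_lists (m + n) \<subseteq> (\<lambda>(x,y). x @ y) ` (bool_lists m \<times> bool_lists n)"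
    proof
      fix s assume "s \<in> bool_lists (m + n)"
      then have "(take m s, drop m s) \<in> bool_lists m \<times> bool_lists n" "s = (\<lambda>(x,y). x @ y) (take m s, drop m s)" by auto
      then show "s \<in> (\<lambda>(x,y). x @ y) ` (bool_lists m \<times> bool_lists n)" by blast
    qed
  qed
  have inj: "inj_on (\<lambda>(x,y). x @ y) (bool_lists m \<times> bool_lists n)"
    by (auto simp: inj_on_def)
  have "(\<Sum>s1\<in>bool_lists m. \<Sum>s2\<in>bool_lists n. F (s1 @ s2)) = (\<Sum>p\<in>bool_lists m \<times> bool_lists n. F ((\<lambda>(x,y). x @ y) p))"
    by (simp add: sum.cartesian_product case_prod_beta)
  also have "\<dots> = (\<Sum>s\<in>(\<lambda>(x,y). x @ y) ` (bool_lists m \<times> bool_lists n). F s)"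
    by (rule sum.reindex[OF inj, symmetric, unfolded comp_def])
  finally show ?thesis unfolding img by simp
qed

lemma bool_lists_1: "bool_lists 1 = {[False], [True]}"
proof
  show "bool_lists 1 \<subseteq> {[False], [True]}"
  proof
    fix s :: "bool list" assume "s \<in> bool_lists 1"
    then obtain h where "s = [h]" by (auto simp: length_Suc_conv)
    then show "s \<in> {[False], [True]}" by (cases h) auto
  qed
qed auto

lemma sum_bool_lists_prod_list:
  fixes \<phi> :: "bool \<Rightarrow> real"
  shows "(\<Sum>s\<in>bool_lists n. prod_list (map \<phi> s)) = (\<phi> False + \<phi> True) ^ n"
proof (induction n)
  case 0
  have "bool_lists 0 = {[]}" by auto
  then show ?case by simp
next
  case (Suc n)
  have "(\<Sum>s\<in>bool_lists (Suc n). prod_list (map \<phi> s)) = (\<Sum>s\<in>bool_lists (1 + n). prod_list (map \<phi> s))" by simp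
  also have "\<dots> = (\<Sum>s1\<in>bool_lists 1. \<Sum>s2\<in>bool_lists n. prod_list (map \<phi> (s1 @ s2)))" by (rule sum_bool_lists_append)
  also have "\<dots> = (\<phi> False + \<phi> True) * (\<Sum>s2\<in>bool_lists n. prod_list (map \<phi> s2))"
  proof -
    have e1: "(\<Sum>s2\<in>bool_lists n. \<phi> False * prod_list (map \<phi> s2)) = \<phi> False * (\<Sum>s2\<in>bool_lists n. prod_list (map \<phi> s2))"
      by (rule sum_distrib_left[symmetric])
    have e2: "(\<Sum>s2\<in>bool_lists n. \<phi> True * prod_list (map \<phi> s2)) = \<phi> True * (\<Sum>s2\<in>bool_lists n. prod_list (map \<phi> s2))"
      by (rule sum_distrib_left[symmetric])
    show ?thesis unfolding bool_lists_1 using e1 e2 by (simp add: distrib_right)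
  qed
  finally show ?case using Suc by simp
qed

lemma hcount_eq_0_iff: "length s = n \<Longrightarrow> (hcount s = 0) = (s = replicate n False)"
proof (induction s arbitrary: n)
  case Nil then show ?case by (simp add: hcount_def)
next
  case (Cons h s)
  then obtain n' where "n = Suc n'" by auto
  then show ?case using Cons by (cases h) (auto simp: hcount_def)
qed

lemma sum_bool_lists_split_hcount:
  fixes \<phi> :: "bool \<Rightarrow> real"
  shows "(\<Sum>s\<in>bool_lists n. prod_list (map \<phi> s) * F (hcount s = 0))
     = \<phi> False ^ n * F True + ((\<phi> False + \<phi> True) ^ n - \<phi> False ^ n) * F False"
proof -
  let ?r = "replicate n False"
  have r: "?r \<in> bool_lists n" by simp
  have pr: "prod_list (map \<phi> ?r) = \<phi> False ^ n" by (simp add: prod_list_replicate)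
  have "(\<Sum>s\<in>bool_lists n. prod_list (map \<phi> s) * F (hcount s = 0))
      = prod_list (map \<phi> ?r) * F (hcount ?r = 0) + (\<Sum>s\<in>bool_lists n - {?r}. prod_list (map \<phi> s) * F (hcount s = 0))"
    by (rule sum.remove[OF finite_bool_lists r])
  also have "(\<Sum>s\<in>bool_lists n - {?r}. prod_list (map \<phi> s) * F (hcount s = 0))
      = (\<Sum>s\<in>bool_lists n - {?r}. prod_list (map \<phi> s)) * F False"
    unfolding sum_distrib_right by (rule sum.cong) (auto simp: hcount_eq_0_iff)
  also have "(\<Sum>s\<in>bool_lists n - {?r}. prod_list (map \<phi> s)) = (\<phi> False + \<phi> True) ^ n - \<phi> False ^ n"
    using sum.remove[OF finite_bool_lists r, of "\<lambda>s. prod_list (map \<phi> s)"] sum_bool_lists_prod_list[where n=n and \<phi>=\<phi>] pr by simp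
  finally show ?thesis using pr hcount_eq_0_iff[of ?r n] by simp
qed

text \<open>The total weight of the states of a block of n crossings without (z) or with (\<open>\<not> z\<close>)
  a horizontal smoothing, a crossing smoothed by h having weight \<open>\<phi> h\<close>.\<close>

definition block_sum :: "(bool \<Rightarrow> real) \<Rightarrow> nat \<Rightarrow> bool \<Rightarrow> real" where
  "block_sum \<phi> n z = (if z then \<phi> False ^ n else (\<phi> False + \<phi> True) ^ n - \<phi> False ^ n)"

lemma sum_bool_lists_block_sum:
  fixes \<phi> :: "bool \<Rightarrow> real"
  shows "(\<Sum>s\<in>bool_lists n. prod_list (map \<phi> s) * F (hcount s = 0)) = (\<Sum>z\<in>UNIV. block_sum \<phi> n z * F z)"
  unfolding sum_bool_lists_split_hcount UNIV_bool block_sum_def by simp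

lemma sum4_bool_lists_block_sum:
  fixes \<phi>1 \<phi>2 \<phi>3 \<phi>4 :: "bool \<Rightarrow> real" and G :: "bool \<Rightarrow> bool \<Rightarrow> bool \<Rightarrow> bool \<Rightarrow> real"
  shows "(\<Sum>s1\<in>bool_lists n1. \<Sum>s2\<in>bool_lists n2. \<Sum>s3\<in>bool_lists n3. \<Sum>s4\<in>bool_lists n4.
           prod_list (map \<phi>1 s1) * (prod_list (map \<phi>2 s2) * (prod_list (map \<phi>3 s3) *
           (prod_list (map \<phi>4 s4) * G (hcount s1 = 0) (hcount s2 = 0) (hcount s3 = 0) (hcount s4 = 0)))))
   = (\<Sum>z1\<in>UNIV. \<Sum>z2\<in>UNIV. \<Sum>z3\<in>UNIV. \<Sum>z4\<in>UNIV.
        block_sum \<phi>1 n1 z1 * (block_sum \<phi>2 n2 z2 * (block_sum \<phi>3 n3 z3 * (block_sum \<phi>4 n4 z4 * G z1 z2 z3 z4))))"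
proof -
  define p1 where "p1 s = prod_list (map \<phi>1 s)" for s
  define p2 where "p2 s = prod_list (map \<phi>2 s)" for s
  define p3 where "p3 s = prod_list (map \<phi>3 s)" for s
  define p4 where "p4 s = prod_list (map \<phi>4 s)" for s
  define K3 where "K3 z1 z2 z3 = (\<Sum>z4\<in>UNIV. block_sum \<phi>4 n4 z4 * G z1 z2 z3 z4)" for z1 z2 z3
  define K2 where "K2 z1 z2 = (\<Sum>z3\<in>UNIV. block_sum \<phi>3 n3 z3 * K3 z1 z2 z3)" for z1 z2
  define K1 where "K1 z1 = (\<Sum>z2\<in>UNIV. block_sum \<phi>2 n2 z2 * K2 z1 z2)" for z1
  have s4: "(\<Sum>s4\<in>bool_lists n4. p4 s4 * G x y z (hcount s4 = 0)) = K3 x y z" for x y z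
    unfolding p4_def K3_def by (rule sum_bool_lists_block_sum)
  have s3: "(\<Sum>s3\<in>bool_lists n3. p3 s3 * K3 x y (hcount s3 = 0)) = K2 x y" for x y
    unfolding p3_def K2_def by (rule sum_bool_lists_block_sum)
  have s2: "(\<Sum>s2\<in>bool_lists n2. p2 s2 * K2 x (hcount s2 = 0)) = K1 x" for x
    unfolding p2_def K1_def by (rule sum_bool_lists_block_sum)
  have s1: "(\<Sum>s1\<in>bool_lists n1. p1 s1 * K1 (hcount s1 = 0)) = (\<Sum>z1\<in>UNIV. block_sum \<phi>1 n1 z1 * K1 z1)"
    unfolding p1_def by (rule sum_bool_lists_block_sum)
  have "(\<Sum>s1\<in>bool_lists n1. \<Sum>s2\<in>bool_lists n2. \<Sum>s3\<in>bool_lists n3. \<Sum>s4\<in>bool_lists n4.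
           p1 s1 * (p2 s2 * (p3 s3 * (p4 s4 * G (hcount s1 = 0) (hcount s2 = 0) (hcount s3 = 0) (hcount s4 = 0)))))
      = (\<Sum>s1\<in>bool_lists n1. \<Sum>s2\<in>bool_lists n2. \<Sum>s3\<in>bool_lists n3. p1 s1 * (p2 s2 * (p3 s3 * K3 (hcount s1 = 0) (hcount s2 = 0) (hcount s3 = 0))))"
    by (simp add: sum_distrib_left[symmetric] s4)
  also have "\<dots> = (\<Sum>s1\<in>bool_lists n1. \<Sum>s2\<in>bool_lists n2. p1 s1 * (p2 s2 * K2 (hcount s1 = 0) (hcount s2 = 0)))"
    by (simp add: sum_distrib_left[symmetric] s3)
  also have "\<dots> = (\<Sum>s1\<in>bool_lists n1. p1 s1 * K1 (hcount s1 = 0))"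
    by (simp add: sum_distrib_left[symmetric] s2)
  also have "\<dots> = (\<Sum>z1\<in>UNIV. block_sum \<phi>1 n1 z1 * K1 z1)" by (rule s1)
  also have "\<dots> = (\<Sum>z1\<in>UNIV. \<Sum>z2\<in>UNIV. \<Sum>z3\<in>UNIV. \<Sum>z4\<in>UNIV.
        block_sum \<phi>1 n1 z1 * (block_sum \<phi>2 n2 z2 * (block_sum \<phi>3 n3 z3 * (block_sum \<phi>4 n4 z4 * G z1 z2 z3 z4))))"
    unfolding K1_def K2_def K3_def by (simp add: sum_distrib_left)
  finally show ?thesis unfolding p1_def p2_def p3_def p4_def .
qed

lemma sum_lessThan_map2:
  "length s = length w \<Longrightarrow> (\<Sum>k<length w. g (w!k) (s!k)) = sum_list (map2 g w s)"
  by (simp add: sum_list_sum_nth atLeast0LessThan)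

lemma map2_replicate: "length s = n \<Longrightarrow> map2 g (replicate n x) s = map (g x) s"
  by (induction s arbitrary: n) (auto simp: Suc_length_conv)

lemma power_int_sum_list:
  fixes A :: real
  shows "A \<noteq> 0 \<Longrightarrow> A powi (sum_list (map f s)) = prod_list (map (\<lambda>h. A powi f h) s)"
  by (induction s) (simp_all add: power_int_add)

lemma power_hcount: "(\<delta>::real) ^ hcount s = prod_list (map (\<lambda>h. if h then \<delta> else 1) s)"
  by (induction s) (simp_all add: hcount_def)

lemma prod_list_map_mult: "prod_list (map (\<lambda>h. f h * g h) s) = prod_list (map f s) * (prod_list (map g s) :: real)"
  by (induction s) (simp_all add: algebra_simps)

definition crossing_weight :: "real \<Rightarrow> real \<Rightarrow> nat \<times> bool \<Rightarrow> bool \<Rightarrow> real" where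
  "crossing_weight A \<delta> x h = A powi smoothing_sign x h * (if h then \<delta> else 1)"

lemma block_weight_prod_list:
  fixes A :: real
  assumes "A \<noteq> 0" "length s = n"
  shows "A powi sum_list (map2 smoothing_sign (replicate n x) s) * \<delta> ^ hcount s = prod_list (map (crossing_weight A \<delta> x) s)"
  unfolding map2_replicate[OF assms(2)] power_int_sum_list[OF assms(1)] power_hcount crossing_weight_def prod_list_map_mult[symmetric]
  by simp

lemma state_weight_four_blocks:
  fixes A :: real
  assumes A: "A \<noteq> 0" and l: "length s1 = nat \<bar>a\<bar>" "length s2 = nat \<bar>b\<bar>" "length s3 = nat \<bar>c\<bar>" "length s4 = nat \<bar>d\<bar>"
  defines "\<delta> \<equiv> - A\<^sup>2 - A powi (-2)"
  defines "\<beta> \<equiv> sigma_pow 1 a @ sigma_pow 2 b @ sigma_pow 1 c @ sigma_pow 2 d"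
  shows "A powi (\<Sum>k<length \<beta>. smoothing_sign (\<beta> ! k) ((s1 @ s2 @ s3 @ s4) ! k))
          * \<delta> ^ (state_loops 3 \<beta> (s1 @ s2 @ s3 @ s4) - 1)
    = prod_list (map (crossing_weight A \<delta> (1, 0 \<le> a)) s1) * (prod_list (map (crossing_weight A \<delta> (2, 0 \<le> b)) s2) *
      (prod_list (map (crossing_weight A \<delta> (1, 0 \<le> c)) s3) * (prod_list (map (crossing_weight A \<delta> (2, 0 \<le> d)) s4) *
       \<delta> powi loop_excess (hcount s1 = 0) (hcount s2 = 0) (hcount s3 = 0) (hcount s4 = 0))))"
proof -
  have d0: "\<delta> \<noteq> 0"
  proof -
    have "A powi (-2) > 0" using A by (simp add: power_int_minus)
    moreover have "A\<^sup>2 > 0" using A by simp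
    ultimately show ?thesis unfolding \<delta>_def by linarith
  qed
  have lb: "length (s1 @ s2 @ s3 @ s4) = length \<beta>" using l unfolding \<beta>_def by simp
  have sg: "(\<Sum>k<length \<beta>. smoothing_sign (\<beta> ! k) ((s1 @ s2 @ s3 @ s4) ! k))
      = sum_list (map2 smoothing_sign (sigma_pow 1 a) s1) + sum_list (map2 smoothing_sign (sigma_pow 2 b) s2)
        + sum_list (map2 smoothing_sign (sigma_pow 1 c) s3) + sum_list (map2 smoothing_sign (sigma_pow 2 d) s4)"
    unfolding sum_lessThan_map2[OF lb] unfolding \<beta>_def using l by (simp add: zip_append)
  have L: "int (state_loops 3 \<beta> (s1 @ s2 @ s3 @ s4) - 1)
      = int (hcount s1) + int (hcount s2) + int (hcount s3) + int (hcount s4) + loop_excess (hcount s1 = 0) (hcount s2 = 0) (hcount s3 = 0) (hcount s4 = 0)"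
    unfolding \<beta>_def state_loops_four_blocks[OF l] loop_excess_def using block_loops_pos[of "hcount s1 \<noteq> 0" "hcount s2 \<noteq> 0" "hcount s3 \<noteq> 0" "hcount s4 \<noteq> 0"]
    by (simp add: of_nat_diff)
  have "\<delta> ^ (state_loops 3 \<beta> (s1 @ s2 @ s3 @ s4) - 1) = \<delta> powi int (state_loops 3 \<beta> (s1 @ s2 @ s3 @ s4) - 1)"
    by simp
  also have "\<dots> = \<delta> ^ hcount s1 * \<delta> ^ hcount s2 * \<delta> ^ hcount s3 * \<delta> ^ hcount s4 * \<delta> powi loop_excess (hcount s1 = 0) (hcount s2 = 0) (hcount s3 = 0) (hcount s4 = 0)"
    unfolding L using d0 by (simp add: power_int_add)
  finally have dl: "\<delta> ^ (state_loops 3 \<beta> (s1 @ s2 @ s3 @ s4) - 1) = \<delta> ^ hcount s1 * \<delta> ^ hcount s2 * \<delta> ^ hcount s3 * \<delta> ^ hcount s4 * \<delta> powi loop_excess (hcount s1 = 0) (hcount s2 = 0) (hcount s3 = 0) (hcount s4 = 0)" .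
  have sp: "A powi (x1 + x2 + x3 + x4) = A powi x1 * A powi x2 * A powi x3 * A powi x4" for x1 x2 x3 x4
    using A by (simp add: power_int_add)
  show ?thesis
    unfolding sg dl sp sigma_pow_def
    unfolding block_weight_prod_list[OF A l(1), of "(1, 0 \<le> a)" \<delta>, symmetric] block_weight_prod_list[OF A l(2), of "(2, 0 \<le> b)" \<delta>, symmetric]
      block_weight_prod_list[OF A l(3), of "(1, 0 \<le> c)" \<delta>, symmetric] block_weight_prod_list[OF A l(4), of "(2, 0 \<le> d)" \<delta>, symmetric]
    by (simp only: mult_ac)
qed

lemma kauffman_bracket_four_blocks:
  fixes A :: real and a b c d :: int
  assumes A: "A \<noteq> 0"
  defines "\<delta> \<equiv> - A\<^sup>2 - A powi (-2)"
  defines "\<beta> \<equiv> sigma_pow 1 a @ sigma_pow 2 b @ sigma_pow 1 c @ sigma_pow 2 d"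
  shows "kauffman_bracket 3 \<beta> A
    = (\<Sum>z1\<in>UNIV. \<Sum>z2\<in>UNIV. \<Sum>z3\<in>UNIV. \<Sum>z4\<in>UNIV.
        block_sum (crossing_weight A \<delta> (1, 0 \<le> a)) (nat \<bar>a\<bar>) z1 * (block_sum (crossing_weight A \<delta> (2, 0 \<le> b)) (nat \<bar>b\<bar>) z2 *
        (block_sum (crossing_weight A \<delta> (1, 0 \<le> c)) (nat \<bar>c\<bar>) z3 * (block_sum (crossing_weight A \<delta> (2, 0 \<le> d)) (nat \<bar>d\<bar>) z4 *
         \<delta> powi loop_excess z1 z2 z3 z4))))"
proof -
  define W where "W s = A powi (\<Sum>k<length \<beta>. smoothing_sign (\<beta> ! k) (s ! k)) * \<delta> ^ (state_loops 3 \<beta> s - 1)" for s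
  have lb: "length \<beta> = nat \<bar>a\<bar> + (nat \<bar>b\<bar> + (nat \<bar>c\<bar> + nat \<bar>d\<bar>))" unfolding \<beta>_def by simp
  have "kauffman_bracket 3 \<beta> A = (\<Sum>s\<in>bool_lists (nat \<bar>a\<bar> + (nat \<bar>b\<bar> + (nat \<bar>c\<bar> + nat \<bar>d\<bar>))). W s)"
    unfolding kauffman_bracket_def W_def \<delta>_def lb ..
  also have "\<dots> = (\<Sum>s1\<in>bool_lists (nat \<bar>a\<bar>). \<Sum>s2\<in>bool_lists (nat \<bar>b\<bar>). \<Sum>s3\<in>bool_lists (nat \<bar>c\<bar>). \<Sum>s4\<in>bool_lists (nat \<bar>d\<bar>). W (s1 @ s2 @ s3 @ s4))"
    unfolding sum_bool_lists_append by simp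
  also have "\<dots> = (\<Sum>s1\<in>bool_lists (nat \<bar>a\<bar>). \<Sum>s2\<in>bool_lists (nat \<bar>b\<bar>). \<Sum>s3\<in>bool_lists (nat \<bar>c\<bar>). \<Sum>s4\<in>bool_lists (nat \<bar>d\<bar>).
      prod_list (map (crossing_weight A \<delta> (1, 0 \<le> a)) s1) * (prod_list (map (crossing_weight A \<delta> (2, 0 \<le> b)) s2) *
      (prod_list (map (crossing_weight A \<delta> (1, 0 \<le> c)) s3) * (prod_list (map (crossing_weight A \<delta> (2, 0 \<le> d)) s4) *
       \<delta> powi loop_excess (hcount s1 = 0) (hcount s2 = 0) (hcount s3 = 0) (hcount s4 = 0)))))"
    unfolding W_def \<beta>_def \<delta>_def
    by (intro sum.cong refl) (rule state_weight_four_blocks[OF A]; simp)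
  also have "\<dots> = (\<Sum>z1\<in>UNIV. \<Sum>z2\<in>UNIV. \<Sum>z3\<in>UNIV. \<Sum>z4\<in>UNIV.
        block_sum (crossing_weight A \<delta> (1, 0 \<le> a)) (nat \<bar>a\<bar>) z1 * (block_sum (crossing_weight A \<delta> (2, 0 \<le> b)) (nat \<bar>b\<bar>) z2 *
        (block_sum (crossing_weight A \<delta> (1, 0 \<le> c)) (nat \<bar>c\<bar>) z3 * (block_sum (crossing_weight A \<delta> (2, 0 \<le> d)) (nat \<bar>d\<bar>) z4 *
         \<delta> powi loop_excess z1 z2 z3 z4))))"
    by (rule sum4_bool_lists_block_sum)
  finally show ?thesis .
qed
section \<open>Evaluation at A = t^(-1/4)\<close>

lemma writhe_append: "writhe (x @ y) = writhe x + writhe y"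
  unfolding writhe_def by simp

lemma writhe_sigma_pow: "writhe (sigma_pow i k) = k"
  unfolding writhe_def sigma_pow_def by (simp add: sum_list_replicate)

lemma eps_add: "eps (x + y) = eps x * eps y"
  unfolding eps_def by (simp add: power_int_add)

lemma eps_diff_1: "eps (x - 1) = - eps x"
  unfolding eps_def by (simp add: power_int_diff)

lemma eps_mult_self: "eps x * eps x = 1"
  unfolding eps_def by simp

lemma eps_uminus: "eps (- x) = eps x"
  unfolding eps_def by (rule power_int_minus_one_minus)

lemma eps_cases: "eps x = 1 \<or> eps x = -1"
  unfolding eps_def by (simp add: power_int_minus_left)

lemma power_int_minus_eps: "(- (y::real)) powi e = eps e * y powi e"
  unfolding eps_def by (simp add: power_int_minus_left)

lemma power_int_eq_Apoly:
  fixes t :: real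
  assumes "t > 0"
  shows "t powi e = (t + 1) * Apoly e t + eps e"
  using assms unfolding Apoly_def eps_diff_1 by (simp add: field_simps)

lemma powr_neg_quarter:
  fixes t :: real
  assumes t: "t > 0"
  defines "u \<equiv> t powr (-1/4)"
  shows "u > 0" "t = u powi (-4)"
proof -
  show "u > 0" unfolding u_def using t by simp
  have "u powr real_of_int (-4) = u powi (-4)"
    by (rule powr_real_of_int') (use \<open>u > 0\<close> in auto)
  then have "u powi (-4) = u powr (-4)" by simp
  also have "\<dots> = t" unfolding u_def using t by (simp add: powr_powr)
  finally show "t = u powi (-4)" by simp
qed

lemma powi_nat_abs:
  fixes x :: real
  shows "0 \<le> e \<Longrightarrow> x ^ nat \<bar>e\<bar> = x powi e"
    and "e < 0 \<Longrightarrow> x \<noteq> 0 \<Longrightarrow> (inverse x) ^ nat \<bar>e\<bar> = x powi e"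
  by (simp_all add: power_int_def power_inverse)

lemma block_sum_crossing_weight:
  fixes u t :: real and e :: int and i :: nat
  assumes u: "u > 0" and t: "t = u powi (-4)"
  defines "\<delta> \<equiv> - u\<^sup>2 - u powi (-2)"
  shows "block_sum (crossing_weight u \<delta> (i, 0 \<le> e)) (nat \<bar>e\<bar>) True = u powi e"
    and "block_sum (crossing_weight u \<delta> (i, 0 \<le> e)) (nat \<bar>e\<bar>) False = u powi e * (eps e * (1+t) * Apoly e t)"
proof -
  have u0: "u \<noteq> 0" using u by simp
  have pF: "crossing_weight u \<delta> (i, 0 \<le> e) False = (if 0 \<le> e then u else inverse u)"
    unfolding crossing_weight_def smoothing_sign_def by (simp add: power_int_minus)
  have pT: "crossing_weight u \<delta> (i, 0 \<le> e) True = (if 0 \<le> e then inverse u * \<delta> else u * \<delta>)"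
    unfolding crossing_weight_def smoothing_sign_def by (simp add: power_int_minus)
  show c1: "block_sum (crossing_weight u \<delta> (i, 0 \<le> e)) (nat \<bar>e\<bar>) True = u powi e"
    unfolding block_sum_def pF using powi_nat_abs[of e u] u0 by (cases "0 \<le> e") auto
  have m2: "u powi (-2) = inverse u ^ 2" by (simp add: power_int_minus power_inverse)
  have S: "crossing_weight u \<delta> (i, 0 \<le> e) False + crossing_weight u \<delta> (i, 0 \<le> e) True
      = (if 0 \<le> e then - (inverse u ^ 3) else - (u ^ 3))"
    unfolding pF pT unfolding \<delta>_def m2 using u0 by (simp add: field_simps power2_eq_square power3_eq_cube)
  have m3: "u powi (-3) = inverse u ^ 3" by (simp add: power_int_minus power_inverse)
  have Sn: "(crossing_weight u \<delta> (i, 0 \<le> e) False + crossing_weight u \<delta> (i, 0 \<le> e) True) ^ nat \<bar>e\<bar> = (- (u powi (-3))) powi e"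
  proof (cases "0 \<le> e")
    case True then show ?thesis unfolding S m3 using powi_nat_abs(1)[OF True] by simp
  next
    case False
    have "inverse (- (u powi (-3))) = - (u ^ 3)" unfolding m3 using u0 by (simp add: field_simps)
    then show ?thesis unfolding S using powi_nat_abs(2)[of e "- (u powi (-3))"] False u0 by simp
  qed
  have h1: "u * t = u powi (-3)" unfolding t using u0 by (simp add: power_int_add[symmetric] flip: power_int_add_1')
  have ut: "u powi e * t powi e = (u powi (-3)) powi e"
    by (simp only: power_int_mult_distrib[symmetric] h1)
  have tp: "t > 0" using u unfolding t by (simp add: power_int_minus)
  have t1: "t + 1 \<noteq> 0" using tp by simp
  have ap: "(1 + t) * Apoly e t = t powi e - eps e"
    using power_int_eq_Apoly[OF tp, of e] by simp
  have "u powi e * (eps e * (1+t) * Apoly e t) = (u powi e * eps e) * ((1+t) * Apoly e t)"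
    by (simp only: mult_ac)
  also have "\<dots> = (u powi e * eps e) * (t powi e - eps e)" by (simp only: ap)
  also have "\<dots> = eps e * (u powi e * t powi e) - eps e * eps e * u powi e"
    by (simp add: algebra_simps)
  also have "\<dots> = (- (u powi (-3))) powi e - u powi e"
    unfolding ut eps_mult_self power_int_minus_eps by simp
  finally show "block_sum (crossing_weight u \<delta> (i, 0 \<le> e)) (nat \<bar>e\<bar>) False = u powi e * (eps e * (1+t) * Apoly e t)"
    unfolding block_sum_def Sn using c1[unfolded block_sum_def] by simp
qed

lemma delta_powi_even:
  fixes u t :: real
  assumes u: "u > 0" and t: "t = u powi (-4)" and k: "even k"
  shows "(- u\<^sup>2 - u powi (-2)) powi k = ((1 + t)\<^sup>2 / t) powi (k div 2)"
proof -
  have "(- u\<^sup>2 - u powi (-2)) ^ 2 = (1 + t)\<^sup>2 / t"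
    using u unfolding t
    by (simp add: power_int_minus field_simps) (simp add: algebra_simps power2_eq_square power4_eq_xxxx)
  moreover have "k = 2 * (k div 2)" using k by simp
  ultimately show ?thesis
    by (metis power_int_mult power_int_numeral)
qed

lemma sum4_factor_out:
  fixes pa pb pc pd :: real
  shows "(\<Sum>z1\<in>UNIV. \<Sum>z2\<in>UNIV. \<Sum>z3\<in>UNIV. \<Sum>z4\<in>UNIV.
      (pa * ga z1) * ((pb * gb z2) * ((pc * gc z3) * ((pd * gd z4) * D z1 z2 z3 z4))))
    = pa * pb * pc * pd * (\<Sum>z1\<in>UNIV. \<Sum>z2\<in>UNIV. \<Sum>z3\<in>UNIV. \<Sum>z4\<in>UNIV.
      ga z1 * (gb z2 * (gc z3 * (gd z4 * D z1 z2 z3 z4))))"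
  by (simp add: sum_distrib_left mult_ac)

lemma kauffman_bracket_four_blocks_at:
  fixes u t :: real and a b c d :: int
  assumes u: "u > 0" and t: "t = u powi (-4)"
  shows "kauffman_bracket 3 (sigma_pow 1 a @ sigma_pow 2 b @ sigma_pow 1 c @ sigma_pow 2 d) u
    = u powi (a + b + c + d) * (\<Sum>z1\<in>UNIV. \<Sum>z2\<in>UNIV. \<Sum>z3\<in>UNIV. \<Sum>z4\<in>UNIV.
      (if z1 then 1 else (1+t) * (eps a * Apoly a t)) * ((if z2 then 1 else (1+t) * (eps b * Apoly b t)) *
      ((if z3 then 1 else (1+t) * (eps c * Apoly c t)) * ((if z4 then 1 else (1+t) * (eps d * Apoly d t)) *
       ((1+t)\<^sup>2/t) powi (loop_excess z1 z2 z3 z4 div 2)))))"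
proof -
  define \<delta> where "\<delta> = - u\<^sup>2 - u powi (-2)"
  have block: "block_sum (crossing_weight u \<delta> (i, 0 \<le> e)) (nat \<bar>e\<bar>) z
      = u powi e * (if z then 1 else (1+t) * (eps e * Apoly e t))" for i e z
    using block_sum_crossing_weight[OF u t, of i e] unfolding \<delta>_def by (cases z) (simp_all add: mult_ac)
  have loops: "\<delta> powi loop_excess z1 z2 z3 z4 = ((1+t)\<^sup>2/t) powi (loop_excess z1 z2 z3 z4 div 2)"
    for z1 z2 z3 z4
    unfolding \<delta>_def by (rule delta_powi_even[OF u t even_loop_excess])
  have "u \<noteq> 0" using u by simp
  then have "u powi (a + b + c + d) = u powi a * u powi b * u powi c * u powi d"
    by (simp add: power_int_add)
  then show ?thesis
    unfolding kauffman_bracket_four_blocks[OF \<open>u \<noteq> 0\<close>] \<delta>_def[symmetric] block loops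
    by (simp only: sum4_factor_out)
qed

lemma state_sum_expand:
  fixes t ya yb yc yd :: real
  assumes t: "t > 0"
  shows "(\<Sum>z1\<in>UNIV. \<Sum>z2\<in>UNIV. \<Sum>z3\<in>UNIV. \<Sum>z4\<in>UNIV.
      (if z1 then 1 else (1+t)*ya) * ((if z2 then 1 else (1+t)*yb) *
      ((if z3 then 1 else (1+t)*yc) * ((if z4 then 1 else (1+t)*yd) *
       ((1+t)\<^sup>2/t) powi (loop_excess z1 z2 z3 z4 div 2)))))
    = (1+t)\<^sup>2/t + (1+t)*(ya + yb + yc + yd) + (1+t)\<^sup>2*(ya*yc + yb*yd)
      + t*(ya*yb + ya*yd + yc*yb + yc*yd)
      + t*(1+t)*(ya*yb*yc + ya*yb*yd + ya*yc*yd + yb*yc*yd)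
      + t\<^sup>2*(ya*yb*yc*yd)"
proof -
  have t1: "1 + t \<noteq> 0" "t \<noteq> 0" using t by auto
  define W where "W z1 z2 z3 z4 =
    (1+t) ^ (of_bool (\<not> z1) + of_bool (\<not> z2) + of_bool (\<not> z3) + of_bool (\<not> z4))
    * ((1+t)\<^sup>2/t) powi (loop_excess z1 z2 z3 z4 div 2)" for z1 z2 z3 z4
  have summand: "(if z1 then 1 else (1+t)*ya) * ((if z2 then 1 else (1+t)*yb) *
      ((if z3 then 1 else (1+t)*yc) * ((if z4 then 1 else (1+t)*yd) *
       ((1+t)\<^sup>2/t) powi (loop_excess z1 z2 z3 z4 div 2))))
    = (if z1 then 1 else ya) * (if z2 then 1 else yb) * (if z3 then 1 else yc) * (if z4 then 1 else yd)
      * W z1 z2 z3 z4" for z1 z2 z3 z4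
    unfolding W_def by (cases z1; cases z2; cases z3; cases z4) (simp_all add: algebra_simps)
  have "W True True True True = (1+t)\<^sup>2/t"
    "W False True True True = 1+t" "W True False True True = 1+t"
    "W True True False True = 1+t" "W True True True False = 1+t"
    "W False True False True = (1+t)\<^sup>2" "W True False True False = (1+t)\<^sup>2"
    "W False False True True = t" "W False True True False = t"
    "W True False False True = t" "W True True False False = t"
    "W False False False True = t*(1+t)" "W False False True False = t*(1+t)"
    "W False True False False = t*(1+t)" "W True False False False = t*(1+t)"
    "W False False False False = t\<^sup>2"
    using t1 by (simp_all add: W_def loop_excess_def block_loops_def power_int_minus field_simps)
      (simp_all add: algebra_simps power2_eq_square power4_eq_xxxx)
  then show ?thesis
    unfolding summand UNIV_bool by (simp add: algebra_simps)
qed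

lemma state_sum_closed_form:
  fixes t xa xb xc xd sa sb sc sd pa pb pc pd :: real
  assumes t: "t > 0"
    and s: "sa = 1 \<or> sa = -1" "sb = 1 \<or> sb = -1" "sc = 1 \<or> sc = -1" "sd = 1 \<or> sd = -1"
    and p: "pa = (t+1)*xa + sa" "pb = (t+1)*xb + sb" "pc = (t+1)*xc + sc" "pd = (t+1)*xd + sd"
  shows "sa*sb*sc*sd * (\<Sum>z1\<in>UNIV. \<Sum>z2\<in>UNIV. \<Sum>z3\<in>UNIV. \<Sum>z4\<in>UNIV.
      (if z1 then 1 else (1+t)*(sa*xa)) * ((if z2 then 1 else (1+t)*(sb*xb)) *
      ((if z3 then 1 else (1+t)*(sc*xc)) * ((if z4 then 1 else (1+t)*(sd*xd)) *
       ((1+t)\<^sup>2/t) powi (loop_excess z1 z2 z3 z4 div 2)))))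
    = (1/t) * ((sa*sb*sc*sd*(1+t\<^sup>2) + sa*sc*t*pb*pd + sa*t\<^sup>2*pc*xb*xd - 2*sa*sc*t\<^sup>2*xb*xd)
      + t\<^sup>2*pa * (sb*sd*pc/t + sd*xb*xc + sc*xb*xd + sb*xc*xd)
      + (sc*sd*t\<^sup>2*xa*xb + sb*sc*t\<^sup>2*xa*xd + t^3*xa*xb*xc*xd))"
proof -
  have "1 + t \<noteq> 0" "t \<noteq> 0" using t by auto
  then show ?thesis
    unfolding state_sum_expand[OF t] p using s
    by (elim disjE) (simp_all add: field_simps, simp_all add: algebra_simps power2_eq_square power3_eq_cube)
qed

lemma state_sum_paper_form:
  fixes a b c d :: int and t :: real
  assumes t: "t > 0"
  shows "eps (a + b + c + d) * (\<Sum>z1\<in>UNIV. \<Sum>z2\<in>UNIV. \<Sum>z3\<in>UNIV. \<Sum>z4\<in>UNIV.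
      (if z1 then 1 else (1+t) * (eps a * Apoly a t)) * ((if z2 then 1 else (1+t) * (eps b * Apoly b t)) *
      ((if z3 then 1 else (1+t) * (eps c * Apoly c t)) * ((if z4 then 1 else (1+t) * (eps d * Apoly d t)) *
       ((1+t)\<^sup>2/t) powi (loop_excess z1 z2 z3 z4 div 2)))))
    = (1/t) * ((eps (a + b + c + d) * (1 + t\<^sup>2) + eps (a + c) * t powi (b + d + 1)
               + eps a * t powi (c + 2) * Apoly b t * Apoly d t
               + 2 * eps (a + c - 1) * t\<^sup>2 * Apoly b t * Apoly d t)
      + t powi (a + 2) * (eps (b + d) * t powi (c - 1) + eps d * Apoly b t * Apoly c t
               + eps c * Apoly b t * Apoly d t + eps b * Apoly c t * Apoly d t)
      + (eps (c + d) * t\<^sup>2 * Apoly a t * Apoly b t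
              + eps (b + c) * t\<^sup>2 * Apoly a t * Apoly d t
              + t ^ 3 * Apoly a t * Apoly b t * Apoly c t * Apoly d t))"
proof -
  have "t \<noteq> 0" using t by simp
  then have powers: "t powi (b + d + 1) = t * t powi b * t powi d" "t powi (c + 2) = t\<^sup>2 * t powi c"
    "t powi (a + 2) = t\<^sup>2 * t powi a" "t powi (c - 1) = t powi c / t"
    by (simp_all add: power_int_add power_int_diff)
  show ?thesis
    unfolding powers eps_add eps_diff_1
    using state_sum_closed_form[OF t eps_cases eps_cases eps_cases eps_cases
        power_int_eq_Apoly[OF t] power_int_eq_Apoly[OF t] power_int_eq_Apoly[OF t] power_int_eq_Apoly[OF t],
        of a b c d]
    by (simp add: algebra_simps)
qed

lemma jones_prefactor:
  fixes u :: real
  assumes "u \<noteq> 0"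
  shows "(- (u ^ 3)) powi (- w) = eps w / (u powi w) ^ 3"
proof -
  have "(u ^ 3) powi w = (u powi w) ^ 3"
    by (simp add: power_int_power power_int_power' mult.commute)
  moreover have "inverse (eps w) = eps w"
    using eps_mult_self by (rule inverse_unique)
  ultimately show ?thesis
    using assms by (simp add: power_int_minus_eps eps_uminus power_int_minus divide_inverse)
qed

lemma powr_writhe_half:
  fixes u t :: real
  assumes u: "u > 0" and t: "t = u powi (-4)"
  shows "t powr ((real_of_int w - 2) / 2) = 1 / (t * (u powi w) ^ 2)"
proof -
  have powr_int: "u powr real_of_int k = u powi k" for k
    by (rule powr_real_of_int') (use u in auto)
  have "t = u powr (-4)" using powr_int[of "-4"] t by simp
  then have "t powr ((real_of_int w - 2) / 2) = u powr (-4 * ((real_of_int w - 2) / 2))"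
    by (simp add: powr_powr)
  also have "-4 * ((real_of_int w - 2) / 2) = real_of_int (4 - 2 * w)"
    by simp
  also have "u powr real_of_int (4 - 2 * w) = u powi 4 / (u powi w) ^ 2"
    unfolding powr_int using u by (simp add: power_int_diff power_int_power' mult.commute)
  also have "\<dots> = 1 / (t * (u powi w) ^ 2)"
    using u by (simp add: t power_int_minus field_simps)
  finally show ?thesis .
qed

theorem proposition2p1:
  fixes a b c d :: int and t :: real
  assumes "t > 0"
  defines "w \<equiv> a + b + c + d"
  defines "\<beta> \<equiv> sigma_pow 1 a @ sigma_pow 2 b @ sigma_pow 1 c @ sigma_pow 2 d"
  defines "B1 \<equiv> eps w * (1 + t\<^sup>2) + eps (a + c) * t powi (b + d + 1)
               + eps a * t powi (c + 2) * Apoly b t * Apoly d t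
               + 2 * eps (a + c - 1) * t\<^sup>2 * Apoly b t * Apoly d t"
  defines "B2 \<equiv> eps (b + d) * t powi (c - 1) + eps d * Apoly b t * Apoly c t
               + eps c * Apoly b t * Apoly d t + eps b * Apoly c t * Apoly d t"
  defines "Q \<equiv> eps (c + d) * t\<^sup>2 * Apoly a t * Apoly b t
              + eps (b + c) * t\<^sup>2 * Apoly a t * Apoly d t
              + t ^ 3 * Apoly a t * Apoly b t * Apoly c t * Apoly d t"
  shows "writhe \<beta> = w \<and>
         jones_closure 3 \<beta> t = t powr ((real_of_int w - 2) / 2) * (B1 + t powi (a + 2) * B2 + Q)"
proof
  show writhe: "writhe \<beta> = w"
    unfolding \<beta>_def w_def by (simp add: writhe_append writhe_sigma_pow)
  define u where "u = t powr (-1/4)"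
  have u: "u > 0" "t = u powi (-4)"
    using powr_neg_quarter[OF assms(1)] unfolding u_def by auto
  obtain S where bracket: "kauffman_bracket 3 \<beta> u = u powi w * S"
    and state_sum: "eps w * S = (1/t) * (B1 + t powi (a + 2) * B2 + Q)"
    using kauffman_bracket_four_blocks_at[OF u, of a b c d] state_sum_paper_form[OF assms(1), of a b c d]
    unfolding \<beta>_def[symmetric] w_def[symmetric] B1_def[symmetric] B2_def[symmetric] Q_def[symmetric]
    by blast
  have "jones_closure 3 \<beta> t = eps w / (u powi w) ^ 3 * (u powi w * S)"
    unfolding jones_closure_def Let_def u_def[symmetric] writhe bracket
    using u(1) by (simp add: jones_prefactor)
  also have "\<dots> = 1 / (t * (u powi w) ^ 2) * (B1 + t powi (a + 2) * B2 + Q)"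
    using state_sum u(1) by (simp add: field_simps power3_eq_cube power2_eq_square)
  also have "\<dots> = t powr ((real_of_int w - 2) / 2) * (B1 + t powi (a + 2) * B2 + Q)"
    unfolding powr_writhe_half[OF u] ..
  finally show "jones_closure 3 \<beta> t = t powr ((real_of_int w - 2) / 2) * (B1 + t powi (a + 2) * B2 + Q)" .
qed

end
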